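(* In the setting described in the context, one has identically on $M$: $$\overline{\mathcal K}(H_0)=-2\,\overline{\mathcal L}_1(\bar k)\,H_0 .$$
   Context: Let $M\subset\mathbb C^3$ be a real-analytic real hypersurface, considered locally near a point, represented in holomorphic coordinates $(z_1,z_2,w)$, $w=u+iv$, as a graph $u=F(z_1,z_2,\bar z_1,\bar z_2,v)$; $(z_1,z_2,\bar z_1,\bar z_2,v)$ are coordinates on $M$. Bars denote complex conjugation. Put $A^j:=-iF_{z_j}/(1+iF_v)$ ($j=1,2$), $\mathcal L_j:=\partial_{z_j}+A^j\partial_v$, with conjugates $\overline{\mathcal L}_j$. Let $\ell:=i(\mathcal L_1(\overline{A^1})-\overline{\mathcal L}_1(A^1))$, assumed nowhere zero. Assume the Levi form of $M$ has constant rank $1$, let $k:=-(\mathcal L_2(\overline{A^1})-\overline{\mathcal L}_1(A^2))/(\mathcal L_1(\overline{A^1})-\overline{\mathcal L}_1(A^1))$, $\mathcal K:=k\mathcal L_1+\mathcal L_2$, $\overline{\mathcal K}=\bar k\overline{\mathcal L}_1+\overline{\mathcal L}_2$. Assume 2-nondegeneracy: $\overline{\mathcal L}_1(k)$ vanishes nowhere. Let $P:=(\ell_{z_1}+A^1\ell_v-\ell A^1_v)/\ell$ and $$H_0:=-\tfrac16\tfrac{\overline{\mathcal L}_1(\overline{\mathcal L}_1(\overline{\mathcal L}_1(k)))}{\overline{\mathcal L}_1(k)}+\tfrac29\tfrac{\overline{\mathcal L}_1(\overline{\mathcal L}_1(k))^2}{\overline{\mathcal L}_1(k)^2}+\tfrac1{18}\tfrac{\overline{\mathcal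 L}_1(\overline{\mathcal L}_1(k))\,\overline P}{\overline{\mathcal L}_1(k)}+\tfrac16\overline{\mathcal L}_1(\overline P)-\tfrac19\overline P^{\,2}.$$ *)

theory Defs
  imports "HOL-Analysis.Analysis"
begin

text \<open>Points of M in the coordinates (z1, z2, v), z_j complex, v real.
  Real coordinates: z_j = x_j + i y_j.\<close>
type_synonym pt = "complex \<times> complex \<times> real"

definition pd :: "pt \<Rightarrow> (pt \<Rightarrow> complex) \<Rightarrow> pt \<Rightarrow> complex" where
  "pd e f p = frechet_derivative f (at p) e"

definition ex1 :: pt where "ex1 = (1, 0, 0)"
definition ey1 :: pt where "ey1 = (\<i>, 0, 0)"
definition ex2 :: pt where "ex2 = (0, 1, 0)"
definition ey2 :: pt where "ey2 = (0, \<i>, 0)"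
definition ev :: pt where "ev = (0, 0, 1)"

definition dz1 :: "(pt \<Rightarrow> complex) \<Rightarrow> pt \<Rightarrow> complex" where
  "dz1 f p = (pd ex1 f p - \<i> * pd ey1 f p) / 2"
definition dz2 :: "(pt \<Rightarrow> complex) \<Rightarrow> pt \<Rightarrow> complex" where
  "dz2 f p = (pd ex2 f p - \<i> * pd ey2 f p) / 2"
definition dzb1 :: "(pt \<Rightarrow> complex) \<Rightarrow> pt \<Rightarrow> complex" where
  "dzb1 f p = (pd ex1 f p + \<i> * pd ey1 f p) / 2"
definition dzb2 :: "(pt \<Rightarrow> complex) \<Rightarrow> pt \<Rightarrow> complex" where
  "dzb2 f p = (pd ex2 f p + \<i> * pd ey2 f p) / 2"
definition dv :: "(pt \<Rightarrow> complex) \<Rightarrow> pt \<Rightarrow> complex" where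
  "dv f p = pd ev f p"

definition cj :: "(pt \<Rightarrow> complex) \<Rightarrow> pt \<Rightarrow> complex" where
  "cj f p = cnj (f p)"

definition smooth_on :: "pt set \<Rightarrow> (pt \<Rightarrow> complex) \<Rightarrow> bool" where
  "smooth_on U f \<longleftrightarrow>
     (\<forall>es. set es \<subseteq> {ex1, ey1, ex2, ey2, ev} \<longrightarrow>
        (\<forall>p\<in>U. foldr pd es f differentiable (at p)))"

text \<open>The data attached to the defining function F of M: u = F(z, zbar, v).\<close>
definition Fc :: "(pt \<Rightarrow> real) \<Rightarrow> pt \<Rightarrow> complex" where
  "Fc F p = complex_of_real (F p)"

definition A1 :: "(pt \<Rightarrow> real) \<Rightarrow> pt \<Rightarrow> complex" where
  "A1 F p = - \<i> * dz1 (Fc F) p / (1 + \<i> * dv (Fc F) p)"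
definition A2 :: "(pt \<Rightarrow> real) \<Rightarrow> pt \<Rightarrow> complex" where
  "A2 F p = - \<i> * dz2 (Fc F) p / (1 + \<i> * dv (Fc F) p)"

definition L1 :: "(pt \<Rightarrow> real) \<Rightarrow> (pt \<Rightarrow> complex) \<Rightarrow> pt \<Rightarrow> complex" where
  "L1 F g p = dz1 g p + A1 F p * dv g p"
definition L2 :: "(pt \<Rightarrow> real) \<Rightarrow> (pt \<Rightarrow> complex) \<Rightarrow> pt \<Rightarrow> complex" where
  "L2 F g p = dz2 g p + A2 F p * dv g p"
definition Lb1 :: "(pt \<Rightarrow> real) \<Rightarrow> (pt \<Rightarrow> complex) \<Rightarrow> pt \<Rightarrow> complex" where
  "Lb1 F g p = dzb1 g p + cnj (A1 F p) * dv g p"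
definition Lb2 :: "(pt \<Rightarrow> real) \<Rightarrow> (pt \<Rightarrow> complex) \<Rightarrow> pt \<Rightarrow> complex" where
  "Lb2 F g p = dzb2 g p + cnj (A2 F p) * dv g p"

text \<open>Levi matrix entries: [L_j, Lbar_k] = (L_j(conj A^k) - Lbar_k(A^j)) d/dv.\<close>
definition levi :: "(pt \<Rightarrow> real) \<Rightarrow> nat \<Rightarrow> nat \<Rightarrow> pt \<Rightarrow> complex" where
  "levi F j k p =
     (let Lj = (if j = 1 then L1 F else L2 F);
          Lbk = (if k = 1 then Lb1 F else Lb2 F);
          Ak = (if k = 1 then A1 F else A2 F);
          Aj = (if j = 1 then A1 F else A2 F)
      in Lj (cj Ak) p - Lbk Aj p)"

definition levi_rank_one :: "(pt \<Rightarrow> real) \<Rightarrow> pt \<Rightarrow> bool" where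
  "levi_rank_one F p \<longleftrightarrow>
     (\<exists>j\<in>{1,2}. \<exists>k\<in>{1,2}. levi F j k p \<noteq> 0) \<and>
     levi F 1 1 p * levi F 2 2 p - levi F 1 2 p * levi F 2 1 p = 0"

definition ell :: "(pt \<Rightarrow> real) \<Rightarrow> pt \<Rightarrow> complex" where
  "ell F p = \<i> * (L1 F (cj (A1 F)) p - Lb1 F (A1 F) p)"

definition kk :: "(pt \<Rightarrow> real) \<Rightarrow> pt \<Rightarrow> complex" where
  "kk F p = - (L2 F (cj (A1 F)) p - Lb1 F (A2 F) p) / (L1 F (cj (A1 F)) p - Lb1 F (A1 F) p)"

definition Kb :: "(pt \<Rightarrow> real) \<Rightarrow> (pt \<Rightarrow> complex) \<Rightarrow> pt \<Rightarrow> complex" where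
  "Kb F g p = cnj (kk F p) * Lb1 F g p + Lb2 F g p"

definition PP :: "(pt \<Rightarrow> real) \<Rightarrow> pt \<Rightarrow> complex" where
  "PP F p = (dz1 (ell F) p + A1 F p * dv (ell F) p - ell F p * dv (A1 F) p) / ell F p"

definition H0 :: "(pt \<Rightarrow> real) \<Rightarrow> pt \<Rightarrow> complex" where
  "H0 F p =
    (let k = kk F; Pb = cj (PP F);
         k1 = Lb1 F k; k2 = Lb1 F k1; k3 = Lb1 F k2
     in - (1/6) * k3 p / k1 p + (2/9) * (k2 p)^2 / (k1 p)^2
        + (1/18) * k2 p * Pb p / k1 p + (1/6) * Lb1 F Pb p - (1/9) * (Pb p)^2)"

end

theory Submission
  imports Defs
begin

text \<open>The operators \<open>Lb1\<close> and \<open>Lb2\<close> commute, since both annihilate the holomorphic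
  coordinate \<open>w = F + i v\<close> of \<open>M\<close>; with the rank-one relations between the Levi entries this
  gives \<open>[Kb, Lb1] = - Lb1(cj k) Lb1\<close>. The Jacobi identity for \<open>Kb\<close>, \<open>K = k L1 + L2\<close> and
  \<open>Lb1\<close>, tested on the coordinate functions \<open>z1\<close>, \<open>cj z1\<close> and \<open>v\<close>, yields \<open>Kb k = 0\<close>;
  the one for \<open>Kb\<close>, \<open>L1\<close>, \<open>Lb1\<close> yields
  \<open>Kb ell = ell (cj k dv(cj A1) + dv(cj A2) - Lb1(cj k))\<close>, and hence
  \<open>Kb Pb = - Lb1(Lb1(cj k)) - Lb1(cj k) Pb\<close>. Iterating the commutator then computes \<open>Kb\<close> on
  \<open>Lb1 k\<close>, \<open>Lb1\<^sup>2 k\<close>, \<open>Lb1\<^sup>3 k\<close>, \<open>Pb\<close> and \<open>Lb1 Pb\<close>; substituted into \<open>H0\<close>, every term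
  not proportional to \<open>H0\<close> cancels.\<close>

section \<open>Symmetry of second derivatives\<close>

lemma second_difference_mvt:
  fixes f :: "'a::real_normed_vector \<Rightarrow> 'b::real_normed_vector"
  assumes t: "0 \<le> t"
    and df: "\<And>s. s \<in> {0..t} \<Longrightarrow> f differentiable (at (q + s *\<^sub>R a)) \<and> f differentiable (at (p + s *\<^sub>R a))"
    and bound: "\<And>s. s \<in> {0..t} \<Longrightarrow>
      norm (frechet_derivative f (at (q + s *\<^sub>R a)) a - frechet_derivative f (at (p + s *\<^sub>R a)) a - c) \<le> B"
  shows "norm (f (q + t *\<^sub>R a) - f (p + t *\<^sub>R a) - f q + f p - t *\<^sub>R c) \<le> B * t"
proof -
  define H where "H s = f (q + s *\<^sub>R a) - f (p + s *\<^sub>R a) - s *\<^sub>R c" for s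
  define D where "D s = frechet_derivative f (at (q + s *\<^sub>R a)) a
    - frechet_derivative f (at (p + s *\<^sub>R a)) a - c" for s
  have along: "((\<lambda>s. f (r + s *\<^sub>R a)) has_derivative
      (\<lambda>h. h *\<^sub>R frechet_derivative f (at (r + s *\<^sub>R a)) a)) (at s within {0..t})"
    if "f differentiable (at (r + s *\<^sub>R a))" for r s
  proof -
    have line: "((\<lambda>s. r + s *\<^sub>R a) has_derivative (\<lambda>h. h *\<^sub>R a)) (at s within {0..t})"
      by (auto intro!: derivative_eq_intros)
    have fd: "(f has_derivative frechet_derivative f (at (r + s *\<^sub>R a))) (at (r + s *\<^sub>R a))"
      using that frechet_derivative_works by blast
    then interpret bounded_linear "frechet_derivative f (at (r + s *\<^sub>R a))"
      using has_derivative_bounded_linear by blast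
    show ?thesis using has_derivative_compose[OF line fd] by (simp add: scale)
  qed
  have "norm (H t - H 0) \<le> B * norm (t - 0)"
  proof (rule differentiable_bound[where f' = "\<lambda>s h. h *\<^sub>R D s"])
    show "(H has_derivative (\<lambda>h. h *\<^sub>R D s)) (at s within {0..t})" if "s \<in> {0..t}" for s
      using has_derivative_diff[OF has_derivative_diff[OF along along]
          has_derivative_scaleR_left[OF has_derivative_ident, of c]] df[OF that]
      unfolding H_def D_def by (simp add: scaleR_diff_right)
    show "onorm (\<lambda>h. h *\<^sub>R D s) \<le> B" if "s \<in> {0..t}" for s
    proof (rule onorm_le)
      have "norm (D s) \<le> B" using bound[OF that] by (simp add: D_def)
      then show "norm (h *\<^sub>R D s) \<le> B * norm h" for h
        using mult_left_mono[of "norm (D s)" B "\<bar>h\<bar>"] by (simp add: mult.commute)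
    qed
  qed (use t in auto)
  then show ?thesis using t by (simp add: H_def algebra_simps)
qed

lemma has_derivative_approx_on_box:
  fixes g :: "'a::real_normed_vector \<Rightarrow> 'b::real_normed_vector"
  assumes G: "(g has_derivative G) (at p)" and U: "open U" "p \<in> U" and e: "e > 0"
  obtains d where "d > 0"
    and "\<And>s r. 0 \<le> s \<Longrightarrow> s < d \<Longrightarrow> 0 \<le> r \<Longrightarrow> r < d \<Longrightarrow> p + (s *\<^sub>R a + r *\<^sub>R b) \<in> U"
    and "\<And>s r. 0 \<le> s \<Longrightarrow> s < d \<Longrightarrow> 0 \<le> r \<Longrightarrow> r < d \<Longrightarrow>
      norm (g (p + (s *\<^sub>R a + r *\<^sub>R b)) - g p - (s *\<^sub>R G a + r *\<^sub>R G b)) \<le> e * (s * norm a + r * norm b)"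
proof -
  interpret G: bounded_linear G using G has_derivative_bounded_linear by blast
  obtain d1 where d1: "d1 > 0" and
    hd1: "\<And>y. norm (y - p) < d1 \<Longrightarrow> norm (g y - g p - G (y - p)) \<le> e * norm (y - p)"
    using G e unfolding has_derivative_at_alt by blast
  obtain d3 where d3: "d3 > 0" "ball p d3 \<subseteq> U" using U open_contains_ball by blast
  define d where "d = min d1 d3 / (norm a + norm b + 1)"
  have d: "d > 0" using d1 d3 unfolding d_def by (intro divide_pos_pos) (auto intro: add_nonneg_pos)
  have n: "norm (s *\<^sub>R a + r *\<^sub>R b) \<le> s * norm a + r * norm b"
    and small: "norm (s *\<^sub>R a + r *\<^sub>R b) < min d1 d3"
    if "0 \<le> s" "s < d" "0 \<le> r" "r < d" for s r
  proof -
    show n: "norm (s *\<^sub>R a + r *\<^sub>R b) \<le> s * norm a + r * norm b"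
      using that by (metis abs_of_nonneg norm_scaleR norm_triangle_le add_mono order_refl)
    also have "\<dots> \<le> d * (norm a + norm b)"
      using that by (simp add: distrib_left mult_right_mono add_mono)
    also have "\<dots> < d * (norm a + norm b + 1)" using d by simp
    also have "\<dots> = min d1 d3" unfolding d_def
      by (smt (verit) nonzero_eq_divide_eq norm_ge_zero)
    finally show "norm (s *\<^sub>R a + r *\<^sub>R b) < min d1 d3" .
  qed
  show ?thesis
  proof (rule that[OF d])
    show "p + (s *\<^sub>R a + r *\<^sub>R b) \<in> U" if "0 \<le> s" "s < d" "0 \<le> r" "r < d" for s r
      using small[OF that] d3 by (auto simp: dist_norm norm_minus_commute add.commute)
    show "norm (g (p + (s *\<^sub>R a + r *\<^sub>R b)) - g p - (s *\<^sub>R G a + r *\<^sub>R G b))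
        \<le> e * (s * norm a + r * norm b)" if "0 \<le> s" "s < d" "0 \<le> r" "r < d" for s r
      using hd1[of "p + (s *\<^sub>R a + r *\<^sub>R b)"] small[OF that] n[OF that] e
      by (simp add: G.add G.scale) (meson mult_left_mono less_eq_real_def order_trans)
  qed
qed

lemma second_difference_approx:
  fixes f :: "'a::real_normed_vector \<Rightarrow> 'b::real_normed_vector"
  assumes U: "open U" "p \<in> U" and df: "\<forall>x\<in>U. f differentiable (at x)"
    and da: "(\<lambda>x. frechet_derivative f (at x) a) differentiable (at p)" and e: "e > 0"
  shows "\<exists>d>0. \<forall>t. 0 < t \<and> t < d \<longrightarrow>
    norm (f (p + t *\<^sub>R a + t *\<^sub>R b) - f (p + t *\<^sub>R a) - f (p + t *\<^sub>R b) + f p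
          - (t * t) *\<^sub>R frechet_derivative (\<lambda>x. frechet_derivative f (at x) a) (at p) b)
      \<le> e * (t * t) * (2 * norm a + norm b)"
proof -
  define fa where "fa = (\<lambda>x. frechet_derivative f (at x) a)"
  define G where "G = frechet_derivative fa (at p)"
  have "(fa has_derivative G) (at p)"
    unfolding G_def using da frechet_derivative_works unfolding fa_def by blast
  then obtain d where d: "d > 0"
    and inU: "\<And>s r. 0 \<le> s \<Longrightarrow> s < d \<Longrightarrow> 0 \<le> r \<Longrightarrow> r < d \<Longrightarrow> p + (s *\<^sub>R a + r *\<^sub>R b) \<in> U"
    and approx: "\<And>s r. 0 \<le> s \<Longrightarrow> s < d \<Longrightarrow> 0 \<le> r \<Longrightarrow> r < d \<Longrightarrow>
      norm (fa (p + (s *\<^sub>R a + r *\<^sub>R b)) - fa p - (s *\<^sub>R G a + r *\<^sub>R G b)) \<le> e * (s * norm a + r * norm b)"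
    using has_derivative_approx_on_box[OF _ U e] by metis
  show ?thesis
  proof (intro exI[of _ d] conjI allI impI d)
    fix t :: real assume t: "0 < t \<and> t < d"
    have "f differentiable (at (p + t *\<^sub>R b + s *\<^sub>R a)) \<and> f differentiable (at (p + s *\<^sub>R a))"
      if "s \<in> {0..t}" for s
      using df inU[of s t] inU[of s 0] that t by (simp add: ac_simps)
    moreover have "norm (fa (p + t *\<^sub>R b + s *\<^sub>R a) - fa (p + s *\<^sub>R a) - t *\<^sub>R G b)
        \<le> e * t * (2 * norm a + norm b)" if s: "s \<in> {0..t}" for s
    proof -
      have "fa (p + t *\<^sub>R b + s *\<^sub>R a) - fa (p + s *\<^sub>R a) - t *\<^sub>R G b
          = (fa (p + (s *\<^sub>R a + t *\<^sub>R b)) - fa p - (s *\<^sub>R G a + t *\<^sub>R G b))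
          - (fa (p + (s *\<^sub>R a + 0 *\<^sub>R b)) - fa p - (s *\<^sub>R G a + 0 *\<^sub>R G b))"
        by (simp add: algebra_simps)
      then have "norm (fa (p + t *\<^sub>R b + s *\<^sub>R a) - fa (p + s *\<^sub>R a) - t *\<^sub>R G b)
          \<le> e * (s * norm a + t * norm b) + e * (s * norm a + 0 * norm b)"
        using approx[of s t] approx[of s 0] s t norm_triangle_ineq4 by (smt (verit) atLeastAtMost_iff)
      also have "\<dots> \<le> e * t * (2 * norm a + norm b)"
        using s e by (simp add: algebra_simps mult_right_mono mult_left_mono)
      finally show ?thesis .
    qed
    ultimately have "norm (f (p + t *\<^sub>R b + t *\<^sub>R a) - f (p + t *\<^sub>R a) - f (p + t *\<^sub>R b) + f p
        - t *\<^sub>R (t *\<^sub>R G b)) \<le> e * t * (2 * norm a + norm b) * t"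
      using second_difference_mvt[of t f "p + t *\<^sub>R b" a p "t *\<^sub>R G b"] t unfolding fa_def by simp
    then show "norm (f (p + t *\<^sub>R a + t *\<^sub>R b) - f (p + t *\<^sub>R a) - f (p + t *\<^sub>R b) + f p
          - (t * t) *\<^sub>R frechet_derivative (\<lambda>x. frechet_derivative f (at x) a) (at p) b)
        \<le> e * (t * t) * (2 * norm a + norm b)"
      by (simp add: G_def fa_def algebra_simps)
  qed
qed

lemma le_zero_if_le_pos_mult:
  fixes x c :: real
  assumes "\<And>e. e > 0 \<Longrightarrow> x \<le> e * c" "0 \<le> c"
  shows "x \<le> 0"
proof (rule field_le_epsilon[of x 0, simplified])
  fix e :: real assume e: "e > 0"
  have "e / (c + 1) > 0" using assms(2) e by simp
  from assms(1)[OF this] have "x \<le> e / (c + 1) * c" .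
  also have "\<dots> \<le> e" using assms(2) e by (simp add: field_simps)
  finally show "x \<le> e" .
qed

lemma directional_derivatives_commute:
  fixes f :: "'a::real_normed_vector \<Rightarrow> 'b::real_normed_vector"
  assumes U: "open U" "p \<in> U" and df: "\<forall>x\<in>U. f differentiable (at x)"
    and da: "(\<lambda>x. frechet_derivative f (at x) a) differentiable (at p)"
    and db: "(\<lambda>x. frechet_derivative f (at x) b) differentiable (at p)"
  shows "frechet_derivative (\<lambda>x. frechet_derivative f (at x) a) (at p) b
       = frechet_derivative (\<lambda>x. frechet_derivative f (at x) b) (at p) a"
proof -
  let ?X = "frechet_derivative (\<lambda>x. frechet_derivative f (at x) a) (at p) b"
  let ?Y = "frechet_derivative (\<lambda>x. frechet_derivative f (at x) b) (at p) a"
  have bound: "norm (?X - ?Y) \<le> e * (3 * (norm a + norm b))" if e: "e > 0" for e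
  proof -
    obtain d1 where d1: "d1 > 0" and h1: "\<And>t. 0 < t \<and> t < d1 \<Longrightarrow>
      norm (f (p + t *\<^sub>R a + t *\<^sub>R b) - f (p + t *\<^sub>R a) - f (p + t *\<^sub>R b) + f p
          - (t * t) *\<^sub>R ?X) \<le> e * (t * t) * (2 * norm a + norm b)"
      using second_difference_approx[OF U df da e, of b] by blast
    obtain d2 where d2: "d2 > 0" and h2: "\<And>t. 0 < t \<and> t < d2 \<Longrightarrow>
      norm (f (p + t *\<^sub>R b + t *\<^sub>R a) - f (p + t *\<^sub>R b) - f (p + t *\<^sub>R a) + f p
          - (t * t) *\<^sub>R ?Y) \<le> e * (t * t) * (2 * norm b + norm a)"
      using second_difference_approx[OF U df db e, of a] by blast
    define t where "t = min d1 d2 / 2"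
    have t: "0 < t" "t < d1" "t < d2" using d1 d2 by (auto simp: t_def)
    define \<Delta> where "\<Delta> = f (p + t *\<^sub>R a + t *\<^sub>R b) - f (p + t *\<^sub>R a) - f (p + t *\<^sub>R b) + f p"
    have "p + t *\<^sub>R b + t *\<^sub>R a = p + t *\<^sub>R a + t *\<^sub>R b" by (simp add: algebra_simps)
    then have swap: "f (p + t *\<^sub>R b + t *\<^sub>R a) - f (p + t *\<^sub>R b) - f (p + t *\<^sub>R a) + f p = \<Delta>"
      unfolding \<Delta>_def by (simp only:) (simp add: algebra_simps)
    have "norm (\<Delta> - (t * t) *\<^sub>R ?X) \<le> e * (t * t) * (2 * norm a + norm b)"
      using h1[of t] t by (simp add: \<Delta>_def)
    moreover have "norm (\<Delta> - (t * t) *\<^sub>R ?Y) \<le> e * (t * t) * (2 * norm b + norm a)"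
      using h2[of t] t swap by simp
    moreover have "(t * t) *\<^sub>R (?X - ?Y) = (\<Delta> - (t * t) *\<^sub>R ?Y) - (\<Delta> - (t * t) *\<^sub>R ?X)"
      by (simp add: algebra_simps)
    ultimately have "norm ((t * t) *\<^sub>R (?X - ?Y))
        \<le> e * (t * t) * (2 * norm a + norm b) + e * (t * t) * (2 * norm b + norm a)"
      using norm_triangle_ineq4 by (smt (verit))
    also have "\<dots> = (t * t) * (e * (3 * (norm a + norm b)))" by (simp add: algebra_simps)
    finally have "(t * t) * norm (?X - ?Y) \<le> (t * t) * (e * (3 * (norm a + norm b)))"
      using t by simp
    then show ?thesis using t by (simp add: mult_le_cancel_left_pos)
  qed
  from le_zero_if_le_pos_mult[OF bound] show ?thesis by simp
qed

lemma pd_eq: "(f has_derivative f') (at p) \<Longrightarrow> pd e f p = f' e"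
  unfolding pd_def using frechet_derivative_at by metis

lemma pd_const: "pd e (\<lambda>x. c) p = 0"
  using pd_eq[OF has_derivative_const[of c]] by simp

lemma pd_linear: "bounded_linear f \<Longrightarrow> pd e f p = f e"
  using pd_eq[OF bounded_linear_imp_has_derivative] by blast

lemma pd_add:
  assumes "f differentiable (at p)" "g differentiable (at p)"
  shows "pd e (\<lambda>x. f x + g x) p = pd e f p + pd e g p"
  using pd_eq[OF has_derivative_add[OF assms[unfolded frechet_derivative_works]]]
  by (simp add: pd_def)

lemma pd_diff:
  assumes "f differentiable (at p)" "g differentiable (at p)"
  shows "pd e (\<lambda>x. f x - g x) p = pd e f p - pd e g p"
  using pd_eq[OF has_derivative_diff[OF assms[unfolded frechet_derivative_works]]]
  by (simp add: pd_def)

lemma pd_mult: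
  assumes "f differentiable (at p)" "g differentiable (at p)"
  shows "pd e (\<lambda>x. f x * g x) p = f p * pd e g p + pd e f p * g p"
  using pd_eq[OF has_derivative_mult[OF assms[unfolded frechet_derivative_works]]]
  by (simp add: pd_def)

lemma pd_cnj:
  assumes "f differentiable (at p)"
  shows "pd e (\<lambda>x. cnj (f x)) p = cnj (pd e f p)"
  using pd_eq[OF has_derivative_cnj[OF assms[unfolded frechet_derivative_works]]]
  by (simp add: pd_def)

lemma pd_inverse:
  assumes "f differentiable (at p)" "f p \<noteq> 0"
  shows "pd e (\<lambda>x. inverse (f x)) p = - (pd e f p / (f p)\<^sup>2)"
  using pd_eq[OF Deriv.has_derivative_inverse[OF assms(2) assms(1)[unfolded frechet_derivative_works]]]
    assms(2)
  by (simp add: pd_def field_simps power2_eq_square)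

lemma pd_sum:
  "finite I \<Longrightarrow> \<forall>i\<in>I. f i differentiable (at p) \<Longrightarrow>
    pd e (\<lambda>x. \<Sum>i\<in>I. f i x) p = (\<Sum>i\<in>I. pd e (f i) p)"
proof (induction I rule: finite_induct)
  case empty
  then show ?case by (simp add: pd_const)
next
  case (insert j I)
  have "(\<lambda>x. \<Sum>i\<in>I. f i x) differentiable (at p)"
    using insert by (intro differentiable_sum) auto
  then show ?case using insert by (simp add: pd_add)
qed

lemma
  assumes "open U" "p \<in> U" "\<forall>x\<in>U. f x = g x" "f differentiable (at p)"
  shows pd_transform_open: "pd e f p = pd e g p"
    and differentiable_transform_open: "g differentiable (at p)"
proof -
  have "(g has_derivative frechet_derivative f (at p)) (at p)"
    by (rule has_derivative_transform_within_open[OF assms(4)[unfolded frechet_derivative_works]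
          assms(1,2)]) (use assms(3) in auto)
  then show "pd e f p = pd e g p" "g differentiable (at p)"
    using pd_eq[of g] by (auto simp: pd_def differentiable_def)
qed

definition coord_dirs :: "pt set" where
  "coord_dirs = {ex1, ey1, ex2, ey2, ev}"

definition smooth_upto :: "pt set \<Rightarrow> nat \<Rightarrow> (pt \<Rightarrow> complex) \<Rightarrow> bool" where
  "smooth_upto U n f \<longleftrightarrow>
     (\<forall>es. set es \<subseteq> coord_dirs \<and> length es \<le> n \<longrightarrow>
        (\<forall>p\<in>U. foldr pd es f differentiable (at p)))"

lemma coord_dirs_simps [simp]:
  "ex1 \<in> coord_dirs" "ey1 \<in> coord_dirs" "ex2 \<in> coord_dirs" "ey2 \<in> coord_dirs" "ev \<in> coord_dirs"
  by (auto simp: coord_dirs_def)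

lemma smooth_on_iff_smooth_upto: "smooth_on U f \<longleftrightarrow> (\<forall>n. smooth_upto U n f)"
  unfolding smooth_on_def smooth_upto_def coord_dirs_def by blast

lemma smooth_upto_mono: "smooth_upto U n f \<Longrightarrow> m \<le> n \<Longrightarrow> smooth_upto U m f"
  unfolding smooth_upto_def using le_trans by blast

lemma smooth_upto_0: "smooth_upto U 0 f \<longleftrightarrow> (\<forall>p\<in>U. f differentiable (at p))"
  unfolding smooth_upto_def by auto

lemma smooth_upto_differentiable: "smooth_upto U n f \<Longrightarrow> p \<in> U \<Longrightarrow> f differentiable (at p)"
  using smooth_upto_mono[of U n f 0] by (simp add: smooth_upto_0)

lemma smooth_upto_Suc:
  "smooth_upto U (Suc n) f \<longleftrightarrow> smooth_upto U 0 f \<and> (\<forall>e\<in>coord_dirs. smooth_upto U n (pd e f))"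
proof
  assume h: "smooth_upto U (Suc n) f"
  have "smooth_upto U n (pd e f)" if e: "e \<in> coord_dirs" for e
    unfolding smooth_upto_def
  proof (intro allI impI)
    fix es assume "set es \<subseteq> coord_dirs \<and> length es \<le> n"
    then have "set (es @ [e]) \<subseteq> coord_dirs \<and> length (es @ [e]) \<le> Suc n" using e by auto
    then show "\<forall>p\<in>U. foldr pd es (pd e f) differentiable (at p)"
      using h unfolding smooth_upto_def by fastforce
  qed
  then show "smooth_upto U 0 f \<and> (\<forall>e\<in>coord_dirs. smooth_upto U n (pd e f))"
    using h smooth_upto_mono by blast
next
  assume h: "smooth_upto U 0 f \<and> (\<forall>e\<in>coord_dirs. smooth_upto U n (pd e f))"
  show "smooth_upto U (Suc n) f" unfolding smooth_upto_def
  proof (intro allI impI)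
    fix es :: "pt list" assume es: "set es \<subseteq> coord_dirs \<and> length es \<le> Suc n"
    show "\<forall>p\<in>U. foldr pd es f differentiable (at p)"
    proof (cases es rule: rev_exhaust)
      case Nil
      then show ?thesis using h by (simp add: smooth_upto_0)
    next
      case (snoc ys e)
      then show ?thesis using es h unfolding smooth_upto_def by auto
    qed
  qed
qed

lemma smooth_upto_transform_open:
  "open U \<Longrightarrow> \<forall>x\<in>U. f x = g x \<Longrightarrow> smooth_upto U n f \<Longrightarrow> smooth_upto U n g"
proof (induction n arbitrary: f g)
  case 0
  then show ?case using differentiable_transform_open by (metis smooth_upto_0)
next
  case (Suc n)
  have "smooth_upto U n (pd e g)" if e: "e \<in> coord_dirs" for e
  proof -
    have "\<forall>x\<in>U. pd e f x = pd e g x"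
      using Suc.prems pd_transform_open smooth_upto_differentiable by blast
    moreover have "smooth_upto U n (pd e f)" using Suc.prems(3) e by (simp add: smooth_upto_Suc)
    ultimately show ?thesis using Suc.IH Suc.prems(1) by blast
  qed
  moreover have "smooth_upto U 0 g"
    using Suc.prems differentiable_transform_open smooth_upto_differentiable
    by (metis smooth_upto_0)
  ultimately show ?case by (simp add: smooth_upto_Suc)
qed

lemma smooth_upto_const: "smooth_upto U n (\<lambda>x. c)"
proof (induction n arbitrary: c)
  case 0
  then show ?case by (simp add: smooth_upto_0)
next
  case (Suc n)
  then show ?case by (simp add: smooth_upto_Suc smooth_upto_0 pd_const[abs_def])
qed

lemma smooth_upto_linear: "bounded_linear f \<Longrightarrow> smooth_upto U n f"
proof (cases n)
  case (Suc m)
  assume "bounded_linear f"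
  moreover have "pd e f = (\<lambda>x. f e)" if "bounded_linear f" for e
    using pd_linear[OF that] by blast
  ultimately show ?thesis
    using Suc smooth_upto_const
    by (auto simp: smooth_upto_Suc smooth_upto_0 intro: bounded_linear_imp_differentiable)
qed (auto simp: smooth_upto_0 intro: bounded_linear_imp_differentiable)

lemma smooth_upto_Suc_intro:
  assumes "open U" "smooth_upto U 0 g"
    and "\<And>e. e \<in> coord_dirs \<Longrightarrow> \<forall>x\<in>U. d e x = pd e g x"
    and "\<And>e. e \<in> coord_dirs \<Longrightarrow> smooth_upto U n (d e)"
  shows "smooth_upto U (Suc n) g"
  using assms(2) smooth_upto_transform_open[OF assms(1) assms(3,4)] by (simp add: smooth_upto_Suc)

lemma smooth_upto_add:
  "open U \<Longrightarrow> smooth_upto U n f \<Longrightarrow> smooth_upto U n g \<Longrightarrow> smooth_upto U n (\<lambda>x. f x + g x)"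
proof (induction n arbitrary: f g)
  case 0
  then show ?case by (simp add: smooth_upto_0 differentiable_add)
next
  case (Suc n)
  have df: "\<forall>x\<in>U. f differentiable (at x)" "\<forall>x\<in>U. g differentiable (at x)"
    using Suc.prems smooth_upto_differentiable by blast+
  show ?case
  proof (rule smooth_upto_Suc_intro[where d = "\<lambda>e x. pd e f x + pd e g x"])
    show "smooth_upto U 0 (\<lambda>x. f x + g x)" using df by (simp add: smooth_upto_0 differentiable_add)
    fix e assume "e \<in> coord_dirs"
    then show "smooth_upto U n (\<lambda>x. pd e f x + pd e g x)"
      using Suc.IH[OF Suc.prems(1)] Suc.prems(2,3) by (simp add: smooth_upto_Suc)
    show "\<forall>x\<in>U. pd e f x + pd e g x = pd e (\<lambda>x. f x + g x) x" using df by (simp add: pd_add)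
  qed (rule Suc.prems)
qed

lemma smooth_upto_mult:
  "open U \<Longrightarrow> smooth_upto U n f \<Longrightarrow> smooth_upto U n g \<Longrightarrow> smooth_upto U n (\<lambda>x. f x * g x)"
proof (induction n arbitrary: f g)
  case 0
  then show ?case by (simp add: smooth_upto_0 differentiable_mult)
next
  case (Suc n)
  have df: "\<forall>x\<in>U. f differentiable (at x)" "\<forall>x\<in>U. g differentiable (at x)"
    using Suc.prems smooth_upto_differentiable by blast+
  have fg: "smooth_upto U n f" "smooth_upto U n g"
    using Suc.prems smooth_upto_mono[of U "Suc n" _ n] by auto
  show ?case
  proof (rule smooth_upto_Suc_intro[where d = "\<lambda>e x. f x * pd e g x + pd e f x * g x"])
    show "smooth_upto U 0 (\<lambda>x. f x * g x)" using df by (simp add: smooth_upto_0 differentiable_mult)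
    fix e assume "e \<in> coord_dirs"
    then show "smooth_upto U n (\<lambda>x. f x * pd e g x + pd e f x * g x)"
      using Suc.IH Suc.prems fg by (intro smooth_upto_add) (simp_all add: smooth_upto_Suc)
    show "\<forall>x\<in>U. f x * pd e g x + pd e f x * g x = pd e (\<lambda>x. f x * g x) x"
      using df by (simp add: pd_mult)
  qed (rule Suc.prems)
qed

lemma smooth_upto_cnj:
  "open U \<Longrightarrow> smooth_upto U n f \<Longrightarrow> smooth_upto U n (\<lambda>x. cnj (f x))"
proof (induction n arbitrary: f)
  case 0
  then show ?case by (simp add: smooth_upto_0 differentiable_cnj_iff)
next
  case (Suc n)
  have df: "\<forall>x\<in>U. f differentiable (at x)"
    using Suc.prems smooth_upto_differentiable by blast
  show ?case
  proof (rule smooth_upto_Suc_intro[where d = "\<lambda>e x. cnj (pd e f x)"])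
    show "smooth_upto U 0 (\<lambda>x. cnj (f x))" using df by (simp add: smooth_upto_0 differentiable_cnj_iff)
    fix e assume "e \<in> coord_dirs"
    then show "smooth_upto U n (\<lambda>x. cnj (pd e f x))"
      using Suc.IH[OF Suc.prems(1)] Suc.prems(2) by (simp add: smooth_upto_Suc)
    show "\<forall>x\<in>U. cnj (pd e f x) = pd e (\<lambda>x. cnj (f x)) x" using df by (simp add: pd_cnj)
  qed (rule Suc.prems)
qed

lemma smooth_upto_inverse:
  "open U \<Longrightarrow> smooth_upto U n f \<Longrightarrow> \<forall>x\<in>U. f x \<noteq> 0 \<Longrightarrow> smooth_upto U n (\<lambda>x. inverse (f x))"
proof (induction n)
  case 0
  then show ?case by (simp add: smooth_upto_0 differentiable_inverse)
next
  case (Suc n)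
  have df: "\<forall>x\<in>U. f differentiable (at x)"
    using Suc.prems smooth_upto_differentiable by blast
  have ih: "smooth_upto U n (\<lambda>x. inverse (f x))"
    using Suc smooth_upto_mono[of U "Suc n" f n] by auto
  show ?case
  proof (rule smooth_upto_Suc_intro[where d = "\<lambda>e x. - 1 * (pd e f x * (inverse (f x) * inverse (f x)))"])
    show "smooth_upto U 0 (\<lambda>x. inverse (f x))"
      using df Suc.prems(3) by (simp add: smooth_upto_0 differentiable_inverse)
    fix e assume "e \<in> coord_dirs"
    then show "smooth_upto U n (\<lambda>x. - 1 * (pd e f x * (inverse (f x) * inverse (f x))))"
      using Suc.prems ih by (intro smooth_upto_mult smooth_upto_const) (simp_all add: smooth_upto_Suc)
    show "\<forall>x\<in>U. - 1 * (pd e f x * (inverse (f x) * inverse (f x))) = pd e (\<lambda>x. inverse (f x)) x"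
      using df Suc.prems(3) by (simp add: pd_inverse power2_eq_square divide_inverse)
  qed (rule Suc.prems)
qed

lemma smooth_on_transform_open: "open U \<Longrightarrow> \<forall>x\<in>U. f x = g x \<Longrightarrow> smooth_on U f \<Longrightarrow> smooth_on U g"
  unfolding smooth_on_iff_smooth_upto using smooth_upto_transform_open by blast

lemma smooth_on_const: "smooth_on U (\<lambda>x. c)"
  unfolding smooth_on_iff_smooth_upto using smooth_upto_const by blast

lemma smooth_on_linear: "bounded_linear f \<Longrightarrow> smooth_on U f"
  unfolding smooth_on_iff_smooth_upto using smooth_upto_linear by blast

lemma smooth_on_add: "open U \<Longrightarrow> smooth_on U f \<Longrightarrow> smooth_on U g \<Longrightarrow> smooth_on U (\<lambda>x. f x + g x)"
  unfolding smooth_on_iff_smooth_upto using smooth_upto_add by blast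

lemma smooth_on_mult: "open U \<Longrightarrow> smooth_on U f \<Longrightarrow> smooth_on U g \<Longrightarrow> smooth_on U (\<lambda>x. f x * g x)"
  unfolding smooth_on_iff_smooth_upto using smooth_upto_mult by blast

lemma smooth_on_cnj: "open U \<Longrightarrow> smooth_on U f \<Longrightarrow> smooth_on U (\<lambda>x. cnj (f x))"
  unfolding smooth_on_iff_smooth_upto using smooth_upto_cnj by blast

lemma smooth_on_inverse:
  "open U \<Longrightarrow> smooth_on U f \<Longrightarrow> \<forall>x\<in>U. f x \<noteq> 0 \<Longrightarrow> smooth_on U (\<lambda>x. inverse (f x))"
  unfolding smooth_on_iff_smooth_upto using smooth_upto_inverse by blast

lemma smooth_on_differentiable: "smooth_on U f \<Longrightarrow> p \<in> U \<Longrightarrow> f differentiable (at p)"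
  unfolding smooth_on_iff_smooth_upto using smooth_upto_differentiable by blast

lemma smooth_on_pd: "smooth_on U f \<Longrightarrow> e \<in> coord_dirs \<Longrightarrow> smooth_on U (pd e f)"
  unfolding smooth_on_iff_smooth_upto using smooth_upto_Suc by blast

lemma smooth_on_minus: assumes "open U" "smooth_on U f" shows "smooth_on U (\<lambda>x. - f x)"
  using smooth_on_mult[OF assms(1) smooth_on_const assms(2), of "- 1"] by simp

lemma smooth_on_diff:
  assumes "open U" "smooth_on U f" "smooth_on U g" shows "smooth_on U (\<lambda>x. f x - g x)"
  using smooth_on_add[OF assms(1,2) smooth_on_minus[OF assms(1,3)]] by simp

lemma smooth_on_divide:
  assumes "open U" "smooth_on U f" "smooth_on U g" "\<forall>x\<in>U. g x \<noteq> 0"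
  shows "smooth_on U (\<lambda>x. f x / g x)"
  using smooth_on_mult[OF assms(1,2) smooth_on_inverse[OF assms(1,3,4)]] by (simp add: divide_inverse)

lemma smooth_on_cj: "open U \<Longrightarrow> smooth_on U f \<Longrightarrow> smooth_on U (cj f)"
  using smooth_on_cnj by (simp add: cj_def[abs_def])

lemma pd_commute:
  "open U \<Longrightarrow> smooth_on U f \<Longrightarrow> p \<in> U \<Longrightarrow> a \<in> coord_dirs \<Longrightarrow> b \<in> coord_dirs \<Longrightarrow>
    pd b (pd a f) p = pd a (pd b f) p"
  unfolding pd_def[abs_def]
  by (rule directional_derivatives_commute[of U])
    (auto intro: smooth_on_differentiable smooth_on_pd[unfolded pd_def[abs_def]])

definition coord_dir :: "nat \<Rightarrow> pt" where
  "coord_dir i = [ex1, ey1, ex2, ey2, ev] ! i"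

definition vfield :: "(nat \<Rightarrow> pt \<Rightarrow> complex) \<Rightarrow> (pt \<Rightarrow> complex) \<Rightarrow> pt \<Rightarrow> complex" where
  "vfield a h p = (\<Sum>i<5. a i p * pd (coord_dir i) h p)"

lemma coord_dir_in_coord_dirs: "i < 5 \<Longrightarrow> coord_dir i \<in> coord_dirs"
  by (auto simp: coord_dir_def coord_dirs_def less_Suc_eq numeral_eq_Suc)

lemma vfield_expand:
  "vfield a h p = a 0 p * pd ex1 h p + a 1 p * pd ey1 h p + a 2 p * pd ex2 h p
     + a 3 p * pd ey2 h p + a 4 p * pd ev h p"
  by (simp add: vfield_def coord_dir_def numeral_eq_Suc lessThan_Suc)

lemma vfield_lincomb: "vfield (\<lambda>i x. f x * a i x + b i x) h p = f p * vfield a h p + vfield b h p"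
  unfolding vfield_def by (simp add: sum_distrib_left sum.distrib distrib_right mult.assoc)

text \<open>The calculus rules are stated for an operator \<open>X\<close> with \<open>X = vfield c\<close>, so that they apply
  directly to \<open>L1 F\<close>, \<open>Kb F\<close>, \<open>dv\<close>, \<dots> once these are shown to be of that form.\<close>

lemma vfield_const: "X = vfield c \<Longrightarrow> X (\<lambda>x. d) p = 0"
  by (simp add: vfield_def pd_const)

lemma vfield_add:
  "X = vfield c \<Longrightarrow> f differentiable (at p) \<Longrightarrow> g differentiable (at p) \<Longrightarrow>
    X (\<lambda>x. f x + g x) p = X f p + X g p"
  by (simp add: vfield_def pd_add distrib_left sum.distrib)

lemma vfield_diff:
  "X = vfield c \<Longrightarrow> f differentiable (at p) \<Longrightarrow> g differentiable (at p) \<Longrightarrow>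
    X (\<lambda>x. f x - g x) p = X f p - X g p"
  by (simp add: vfield_def pd_diff right_diff_distrib sum_subtractf)

lemma vfield_mult:
  assumes "X = vfield c" "f differentiable (at p)" "g differentiable (at p)"
  shows "X (\<lambda>x. f x * g x) p = f p * X g p + X f p * g p"
proof -
  have "c i p * pd (coord_dir i) (\<lambda>x. f x * g x) p
      = f p * (c i p * pd (coord_dir i) g p) + (c i p * pd (coord_dir i) f p) * g p" for i
    by (simp add: pd_mult[OF assms(2,3)] algebra_simps)
  then show ?thesis
    by (simp add: assms(1) vfield_def sum.distrib sum_distrib_left sum_distrib_right)
qed

lemma vfield_minus: "X = vfield c \<Longrightarrow> f differentiable (at p) \<Longrightarrow> X (\<lambda>x. - f x) p = - X f p"
  using vfield_mult[of X c "\<lambda>x. - 1" p f] vfield_const[of X c] by simp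

lemma vfield_cmult: "X = vfield c \<Longrightarrow> f differentiable (at p) \<Longrightarrow> X (\<lambda>x. d * f x) p = d * X f p"
  using vfield_mult[of X c "\<lambda>x. d" p f] vfield_const[of X c] by simp

lemma vfield_mult_add:
  assumes "X = vfield c" "f differentiable (at p)" "g differentiable (at p)" "h differentiable (at p)"
  shows "X (\<lambda>x. f x * g x + h x) p = f p * X g p + X f p * g p + X h p"
  using assms(2-4)
  by (simp add: vfield_add[OF assms(1)] vfield_mult[OF assms(1)] differentiable_mult)

lemma vfield_divide:
  assumes "X = vfield c" "f differentiable (at p)" "g differentiable (at p)" "g p \<noteq> 0"
  shows "X (\<lambda>x. f x / g x) p = (X f p * g p - f p * X g p) / (g p)\<^sup>2"
proof -
  define Xi where "Xi = X (\<lambda>x. inverse (g x)) p"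
  have Xi: "Xi = - X g p / (g p)\<^sup>2"
    using assms by (simp add: Xi_def vfield_def pd_inverse sum_divide_distrib sum_negf)
  have "X (\<lambda>x. f x / g x) p = X (\<lambda>x. f x * inverse (g x)) p"
    by (simp add: divide_inverse)
  also have "\<dots> = f p * Xi + X f p * inverse (g p)"
    unfolding Xi_def using assms by (intro vfield_mult differentiable_inverse) auto
  finally show ?thesis
    unfolding Xi using assms(4) by (simp add: field_simps power2_eq_square)
qed

lemma vfield_power2: "X = vfield c \<Longrightarrow> f differentiable (at p) \<Longrightarrow> X (\<lambda>x. (f x)\<^sup>2) p = 2 * f p * X f p"
  using vfield_mult[of X c f p f] by (simp add: power2_eq_square)

lemma vfield_transform_open:
  "X = vfield c \<Longrightarrow> open U \<Longrightarrow> p \<in> U \<Longrightarrow> \<forall>x\<in>U. f x = g x \<Longrightarrow> f differentiable (at p) \<Longrightarrow>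
    X f p = X g p"
  using pd_transform_open[of U p f g] by (simp add: vfield_def)

lemma smooth_on_vfield:
  assumes "open U" "\<forall>i<5. smooth_on U (a i)" "smooth_on U h"
  shows "smooth_on U (vfield a h)"
proof -
  have "smooth_on U (\<lambda>p. \<Sum>i\<in>I. a i p * pd (coord_dir i) h p)" if "I \<subseteq> {..<5}" for I
    using that
  proof (induction I rule: infinite_finite_induct)
    case (infinite A)
    then show ?case using finite_subset by blast
  next
    case empty
    then show ?case by (simp add: smooth_on_const)
  next
    case (insert j I)
    then show ?case
      using assms coord_dir_in_coord_dirs
      by (auto intro!: smooth_on_add smooth_on_mult smooth_on_pd)
  qed
  then show ?thesis unfolding vfield_def[abs_def] by blast
qed

lemma double_sum_commutator:
  fixes a b :: "nat \<Rightarrow> complex"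
  assumes sym: "\<forall>i\<in>I. \<forall>j\<in>I. M i j = M j i"
  shows "(\<Sum>i\<in>I. a i * (\<Sum>j\<in>I. b j * M i j + B i j * H j))
       - (\<Sum>i\<in>I. b i * (\<Sum>j\<in>I. a j * M i j + A i j * H j))
    = (\<Sum>j\<in>I. ((\<Sum>i\<in>I. a i * B i j) - (\<Sum>i\<in>I. b i * A i j)) * H j)"
proof -
  have "(\<Sum>i\<in>I. \<Sum>j\<in>I. b i * a j * M i j) = (\<Sum>j\<in>I. \<Sum>i\<in>I. b i * a j * M i j)"
    by (rule sum.swap)
  also have "\<dots> = (\<Sum>i\<in>I. \<Sum>j\<in>I. a i * b j * M i j)"
    using sym by (intro sum.cong refl) (simp add: mult.commute)
  finally have "(\<Sum>i\<in>I. \<Sum>j\<in>I. b i * a j * M i j) = (\<Sum>i\<in>I. \<Sum>j\<in>I. a i * b j * M i j)" .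
  moreover have "(\<Sum>i\<in>I. \<Sum>j\<in>I. a i * B i j * H j) = (\<Sum>j\<in>I. (\<Sum>i\<in>I. a i * B i j) * H j)"
    "(\<Sum>i\<in>I. \<Sum>j\<in>I. b i * A i j * H j) = (\<Sum>j\<in>I. (\<Sum>i\<in>I. b i * A i j) * H j)"
    by (subst sum.swap, simp add: sum_distrib_right)+
  ultimately show ?thesis
    by (simp add: sum_distrib_left distrib_left sum.distrib mult.assoc sum_subtractf
        left_diff_distrib)
qed

text \<open>The second-order terms cancel by the symmetry of second derivatives.\<close>

lemma vfield_commutator:
  assumes U: "open U" "p \<in> U" and a: "\<forall>i<5. smooth_on U (a i)" and b: "\<forall>i<5. smooth_on U (b i)"
    and h: "smooth_on U h"
  shows "vfield a (vfield b h) p - vfield b (vfield a h) p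
       = vfield (\<lambda>i x. vfield a (b i) x - vfield b (a i) x) h p"
proof -
  have expand: "pd (coord_dir i) (vfield c h) p
      = (\<Sum>j<5. c j p * pd (coord_dir i) (pd (coord_dir j) h) p + pd (coord_dir i) (c j) p * pd (coord_dir j) h p)"
    if c: "\<forall>i<5. smooth_on U (c i)" for c i
  proof -
    have "pd (coord_dir i) (vfield c h) p = (\<Sum>j<5. pd (coord_dir i) (\<lambda>x. c j x * pd (coord_dir j) h x) p)"
      unfolding vfield_def[abs_def] using c U h coord_dir_in_coord_dirs
      by (intro pd_sum) (auto intro!: smooth_on_differentiable[of U] smooth_on_mult smooth_on_pd)
    also have "\<dots> = (\<Sum>j<5. c j p * pd (coord_dir i) (pd (coord_dir j) h) p
                           + pd (coord_dir i) (c j) p * pd (coord_dir j) h p)"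
      using c U h coord_dir_in_coord_dirs
      by (intro sum.cong refl pd_mult) (auto intro!: smooth_on_differentiable smooth_on_pd)
    finally show ?thesis .
  qed
  have "\<forall>i\<in>{..<5}. \<forall>j\<in>{..<5}.
      pd (coord_dir i) (pd (coord_dir j) h) p = pd (coord_dir j) (pd (coord_dir i) h) p"
    using pd_commute[OF U(1) h U(2)] coord_dir_in_coord_dirs by auto
  from double_sum_commutator[OF this, of "\<lambda>i. a i p" "\<lambda>i. b i p" "\<lambda>i j. pd (coord_dir i) (b j) p"
      "\<lambda>j. pd (coord_dir j) h p" "\<lambda>i j. pd (coord_dir i) (a j) p"]
  show ?thesis
    unfolding vfield_def[of a] vfield_def[of b] expand[OF a] expand[OF b]
    by (simp add: vfield_def)
qed

lemma vfield_commutator_vertical: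
  assumes X: "X = vfield a" and Y: "Y = vfield b"
    and "open U" "p \<in> U" "\<forall>i<5. smooth_on U (a i)" "\<forall>i<5. smooth_on U (b i)" "smooth_on U h"
    and "\<forall>i<4. \<exists>c. a i = (\<lambda>x. c)" "\<forall>i<4. \<exists>c. b i = (\<lambda>x. c)"
  shows "X (Y h) p - Y (X h) p = (X (b 4) p - Y (a 4) p) * pd ev h p"
proof -
  have z: "vfield a (b i) p - vfield b (a i) p = 0" if "i < 4" for i
  proof -
    obtain c1 c2 where "a i = (\<lambda>x. c1)" "b i = (\<lambda>x. c2)" using assms(8,9) \<open>i < 4\<close> by blast
    then show ?thesis by (simp add: vfield_const[OF refl])
  qed
  show ?thesis
    unfolding X Y vfield_commutator[OF assms(3-7)]
      vfield_expand[of "\<lambda>i x. vfield a (b i) x - vfield b (a i) x"]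
    using z[of 0] z[of 1] z[of 2] z[of 3] by simp
qed

lemma vfield_diff_of_products:
  assumes X: "X = vfield c" and U: "open U" "p \<in> U"
    and eq: "\<forall>x\<in>U. A x - B x = f x * g x - f' x * g' x"
    and smooth: "smooth_on U A" "smooth_on U B" "smooth_on U f" "smooth_on U g"
      "smooth_on U f'" "smooth_on U g'"
  shows "X A p - X B p = (f p * X g p + X f p * g p) - (f' p * X g' p + X f' p * g' p)"
proof -
  note d = smooth[THEN smooth_on_differentiable, OF U(2)]
  have "X A p - X B p = X (\<lambda>x. A x - B x) p" using vfield_diff[OF X d(1,2)] by simp
  also have "\<dots> = X (\<lambda>x. f x * g x - f' x * g' x) p"
    by (rule vfield_transform_open[OF X U eq]) (use d in simp)
  also have "\<dots> = (f p * X g p + X f p * g p) - (f' p * X g' p + X f' p * g' p)"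
    using d by (simp add: vfield_diff[OF X] vfield_mult[OF X] differentiable_mult)
  finally show ?thesis .
qed

lemma vfield_diff_of_product:
  assumes "X = vfield c" "open U" "p \<in> U" "\<forall>x\<in>U. A x - B x = f x * g x"
    and "smooth_on U A" "smooth_on U B" "smooth_on U f" "smooth_on U g"
  shows "X A p - X B p = f p * X g p + X f p * g p"
  using vfield_diff_of_products[OF assms(1-3), of A B f g "\<lambda>x. 0" "\<lambda>x. 0"] assms(4-8)
  by (simp add: smooth_on_const vfield_const[OF assms(1)])

definition coord_z1 :: "pt \<Rightarrow> complex" where
  "coord_z1 x = fst x"

definition coord_zb1 :: "pt \<Rightarrow> complex" where
  "coord_zb1 x = cnj (fst x)"

definition coord_v :: "pt \<Rightarrow> complex" where
  "coord_v x = complex_of_real (snd (snd x))"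

lemma bounded_linear_coords:
  "bounded_linear coord_z1" "bounded_linear coord_zb1" "bounded_linear coord_v"
  unfolding coord_z1_def[abs_def] coord_zb1_def[abs_def] coord_v_def[abs_def]
  by (intro bounded_linear_fst bounded_linear_compose[OF bounded_linear_cnj bounded_linear_fst]
      bounded_linear_compose[OF bounded_linear_of_real]
      bounded_linear_compose[OF bounded_linear_snd bounded_linear_snd])+

lemma pd_coords: "pd e coord_z1 p = fst e" "pd e coord_zb1 p = cnj (fst e)"
  "pd e coord_v p = of_real (snd (snd e))"
  by (simp_all add: pd_linear bounded_linear_coords) (simp_all add: coord_z1_def coord_zb1_def coord_v_def)

section \<open>The CR structure of the hypersurface\<close>

lemma cj_cj [simp]: "cj (cj f) = f"
  by (simp add: cj_def fun_eq_iff)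

locale levi_rank_one_hypersurface =
  fixes F :: "pt \<Rightarrow> real" and U :: "pt set"
  assumes open_U: "open U"
    and smooth_F: "smooth_on U (Fc F)"
    and ell_nonzero: "\<forall>p\<in>U. ell F p \<noteq> 0"
    and levi_rank_one: "\<forall>p\<in>U. levi_rank_one F p"
    and Lb1_kk_nonzero: "\<forall>p\<in>U. Lb1 F (kk F) p \<noteq> 0"
begin

definition l11 :: "pt \<Rightarrow> complex" where
  "l11 x = L1 F (cj (A1 F)) x - Lb1 F (A1 F) x"

definition l12 :: "pt \<Rightarrow> complex" where
  "l12 x = L1 F (cj (A2 F)) x - Lb2 F (A1 F) x"

definition l21 :: "pt \<Rightarrow> complex" where
  "l21 x = L2 F (cj (A1 F)) x - Lb1 F (A2 F) x"

definition l22 :: "pt \<Rightarrow> complex" where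
  "l22 x = L2 F (cj (A2 F)) x - Lb2 F (A2 F) x"

abbreviation "k1 \<equiv> Lb1 F (kk F)"
abbreviation "k2 \<equiv> Lb1 F k1"
abbreviation "k3 \<equiv> Lb1 F k2"
abbreviation "kb1 \<equiv> Lb1 F (cj (kk F))"
abbreviation "kb2 \<equiv> Lb1 F kb1"
abbreviation "Pb \<equiv> cj (PP F)"

definition K :: "(pt \<Rightarrow> complex) \<Rightarrow> pt \<Rightarrow> complex" where
  "K g p = kk F p * L1 F g p + L2 F g p"

lemma levi_entries: "levi F 1 1 = l11" "levi F 1 2 = l12" "levi F 2 1 = l21" "levi F 2 2 = l22"
  by (simp_all add: levi_def l11_def l12_def l21_def l22_def fun_eq_iff)

lemmas l_defs = l11_def l12_def l21_def l22_def

lemma ell_eq: "ell F = (\<lambda>x. \<i> * l11 x)"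
  by (simp add: ell_def l11_def fun_eq_iff)

lemma l11_nonzero: "p \<in> U \<Longrightarrow> l11 p \<noteq> 0"
  using ell_nonzero by (simp add: ell_eq)

lemma levi_det_zero: "p \<in> U \<Longrightarrow> l11 p * l22 p - l12 p * l21 p = 0"
  using levi_rank_one unfolding levi_rank_one_def levi_entries by simp

lemma kk_eq: "kk F = (\<lambda>x. - l21 x / l11 x)"
  by (simp add: kk_def l_defs fun_eq_iff)

lemma Kb_eq: "Kb F h = (\<lambda>x. cj (kk F) x * Lb1 F h x + Lb2 F h x)"
  by (rule ext) (simp add: Kb_def cj_def)

lemma K_eq: "K h = (\<lambda>x. kk F x * L1 F h x + L2 F h x)"
  by (rule ext) (simp add: K_def)

text \<open>Coefficients with respect to \<open>coord_dir\<close>, i.e. the directions \<open>x\<^sub>1, y\<^sub>1, x\<^sub>2, y\<^sub>2, v\<close>,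
  read off from \<open>\<partial>\<^sub>z\<^sub>j = (\<partial>\<^sub>x\<^sub>j - i \<partial>\<^sub>y\<^sub>j) / 2\<close>.\<close>

definition L1_coeff :: "nat \<Rightarrow> pt \<Rightarrow> complex" where
  "L1_coeff i = (if i = 4 then A1 F else (\<lambda>x. if i = 0 then 1/2 else if i = 1 then - \<i>/2 else 0))"

definition L2_coeff :: "nat \<Rightarrow> pt \<Rightarrow> complex" where
  "L2_coeff i = (if i = 4 then A2 F else (\<lambda>x. if i = 2 then 1/2 else if i = 3 then - \<i>/2 else 0))"

definition Lb1_coeff :: "nat \<Rightarrow> pt \<Rightarrow> complex" where
  "Lb1_coeff i = (if i = 4 then cj (A1 F) else (\<lambda>x. if i = 0 then 1/2 else if i = 1 then \<i>/2 else 0))"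

definition Lb2_coeff :: "nat \<Rightarrow> pt \<Rightarrow> complex" where
  "Lb2_coeff i = (if i = 4 then cj (A2 F) else (\<lambda>x. if i = 2 then 1/2 else if i = 3 then \<i>/2 else 0))"

definition dv_coeff :: "nat \<Rightarrow> pt \<Rightarrow> complex" where
  "dv_coeff i = (\<lambda>x. if i = 4 then 1 else 0)"

lemma L1_vfield: "L1 F = vfield L1_coeff"
  by (intro ext) (simp add: L1_def dz1_def dv_def vfield_expand L1_coeff_def diff_divide_distrib)

lemma L2_vfield: "L2 F = vfield L2_coeff"
  by (intro ext) (simp add: L2_def dz2_def dv_def vfield_expand L2_coeff_def diff_divide_distrib)

lemma Lb1_vfield: "Lb1 F = vfield Lb1_coeff"
  by (intro ext) (simp add: Lb1_def dzb1_def dv_def vfield_expand Lb1_coeff_def add_divide_distrib cj_def)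

lemma Lb2_vfield: "Lb2 F = vfield Lb2_coeff"
  by (intro ext) (simp add: Lb2_def dzb2_def dv_def vfield_expand Lb2_coeff_def add_divide_distrib cj_def)

lemma dv_vfield: "dv = vfield dv_coeff"
  by (intro ext) (simp add: dv_def vfield_expand dv_coeff_def)

lemma Kb_vfield: "Kb F = vfield (\<lambda>i x. cj (kk F) x * Lb1_coeff i x + Lb2_coeff i x)"
  unfolding vfield_lincomb by (intro ext) (simp add: Kb_eq Lb1_vfield Lb2_vfield)

lemma K_vfield: "K = vfield (\<lambda>i x. kk F x * L1_coeff i x + L2_coeff i x)"
  unfolding vfield_lincomb by (intro ext) (simp add: K_def L1_vfield L2_vfield)

lemmas vfields = L1_vfield L2_vfield Lb1_vfield Lb2_vfield dv_vfield Kb_vfield K_vfield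

lemma vector_fields_const [simp]:
  "L1 F (\<lambda>x. c) p = 0" "L2 F (\<lambda>x. c) p = 0" "Lb1 F (\<lambda>x. c) p = 0" "Lb2 F (\<lambda>x. c) p = 0"
  "Kb F (\<lambda>x. c) p = 0" "K (\<lambda>x. c) p = 0" "dv (\<lambda>x. c) p = 0"
  by (rule vfield_const, rule vfields)+

lemma Fc_real: "cj (Fc F) = Fc F"
  by (simp add: cj_def Fc_def fun_eq_iff)

lemma pd_Fc_real: "p \<in> U \<Longrightarrow> cnj (pd e (Fc F) p) = pd e (Fc F) p"
  using pd_cnj[OF smooth_on_differentiable[OF smooth_F], of p e] Fc_real
  by (simp add: cj_def[abs_def])

lemma Im_dv_Fc: "p \<in> U \<Longrightarrow> Im (dv (Fc F) p) = 0"
  using pd_Fc_real[of p ev] unfolding dv_def by (metis Reals_cnj_iff complex_is_Real_iff)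

lemma A_denominator_nonzero: "p \<in> U \<Longrightarrow> 1 + \<i> * dv (Fc F) p \<noteq> 0"
  using Im_dv_Fc[of p] by (simp add: complex_eq_iff)

lemma smooth_dz1: "smooth_on U f \<Longrightarrow> smooth_on U (dz1 f)"
  unfolding dz1_def[abs_def] using open_U
  by (intro smooth_on_divide smooth_on_diff smooth_on_mult smooth_on_const smooth_on_pd) auto

lemma smooth_dz2: "smooth_on U f \<Longrightarrow> smooth_on U (dz2 f)"
  unfolding dz2_def[abs_def] using open_U
  by (intro smooth_on_divide smooth_on_diff smooth_on_mult smooth_on_const smooth_on_pd) auto

lemma smooth_dv: "smooth_on U f \<Longrightarrow> smooth_on U (dv f)"
  unfolding dv_def[abs_def] by (intro smooth_on_pd) auto

lemma smooth_A1: "smooth_on U (A1 F)"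
  unfolding A1_def[abs_def] using open_U A_denominator_nonzero
  by (intro smooth_on_divide smooth_on_add smooth_on_mult smooth_on_const smooth_dz1 smooth_dv smooth_F) auto

lemma smooth_A2: "smooth_on U (A2 F)"
  unfolding A2_def[abs_def] using open_U A_denominator_nonzero
  by (intro smooth_on_divide smooth_on_add smooth_on_mult smooth_on_const smooth_dz2 smooth_dv smooth_F) auto

lemma smooth_cj_A: "smooth_on U (cj (A1 F))" "smooth_on U (cj (A2 F))"
  using smooth_on_cj[OF open_U] smooth_A1 smooth_A2 by blast+

lemma coeffs_4: "L1_coeff 4 = A1 F" "L2_coeff 4 = A2 F" "Lb1_coeff 4 = cj (A1 F)"
  "Lb2_coeff 4 = cj (A2 F)" "dv_coeff 4 = (\<lambda>x. 1)"
  by (simp_all add: L1_coeff_def L2_coeff_def Lb1_coeff_def Lb2_coeff_def dv_coeff_def)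

lemma smooth_coeffs:
  "\<forall>i<5. smooth_on U (L1_coeff i)" "\<forall>i<5. smooth_on U (L2_coeff i)"
  "\<forall>i<5. smooth_on U (Lb1_coeff i)" "\<forall>i<5. smooth_on U (Lb2_coeff i)"
  "\<forall>i<5. smooth_on U (dv_coeff i)"
  using smooth_cj_A
  by (simp_all add: L1_coeff_def L2_coeff_def Lb1_coeff_def Lb2_coeff_def dv_coeff_def
      smooth_A1 smooth_A2 smooth_on_const)

lemma smooth_vector_fields:
  assumes "smooth_on U h"
  shows "smooth_on U (L1 F h)" "smooth_on U (L2 F h)" "smooth_on U (Lb1 F h)" "smooth_on U (Lb2 F h)"
  unfolding vfields using open_U smooth_coeffs assms by (simp_all add: smooth_on_vfield)

lemma smooth_levi: "smooth_on U l11" "smooth_on U l12" "smooth_on U l21" "smooth_on U l22"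
  unfolding l_defs[abs_def] using open_U smooth_A1 smooth_A2
  by (auto intro!: smooth_on_diff smooth_vector_fields smooth_on_cj)

lemma smooth_kk: "smooth_on U (kk F)" "smooth_on U (cj (kk F))"
  unfolding kk_eq using open_U l11_nonzero smooth_levi
  by (auto intro!: smooth_on_cj smooth_on_divide smooth_on_minus)

lemma smooth_K_Kb:
  assumes "smooth_on U h" shows "smooth_on U (Kb F h)" "smooth_on U (K h)"
  unfolding Kb_eq K_eq using open_U smooth_kk smooth_vector_fields[OF assms]
  by (auto intro!: smooth_on_add smooth_on_mult)

lemmas smooth_intros = smooth_vector_fields smooth_K_Kb smooth_kk smooth_levi smooth_A1 smooth_A2
  smooth_cj_A smooth_dv

lemma cnj_vector_fields:
  assumes "h differentiable (at p)"
  shows "cnj (L1 F h p) = Lb1 F (cj h) p" "cnj (L2 F h p) = Lb2 F (cj h) p"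
    "cnj (Lb1 F h p) = L1 F (cj h) p" "cnj (Lb2 F h p) = L2 F (cj h) p"
    "cnj (dv h p) = dv (cj h) p"
  using assms
  by (simp_all add: L1_def L2_def Lb1_def Lb2_def dz1_def dz2_def dzb1_def dzb2_def dv_def
      cj_def[abs_def] pd_cnj)

lemma l11_skew: "p \<in> U \<Longrightarrow> cnj (l11 p) = - l11 p"
  using smooth_on_differentiable[OF smooth_A1] smooth_on_differentiable[OF smooth_cj_A(1)]
  by (simp add: l_defs cnj_vector_fields)

lemma l21_skew: "p \<in> U \<Longrightarrow> cnj (l21 p) = - l12 p"
  using smooth_on_differentiable[OF smooth_A2] smooth_on_differentiable[OF smooth_cj_A(1)]
  by (simp add: l_defs cnj_vector_fields)

lemma cnj_kk: "p \<in> U \<Longrightarrow> cnj (kk F p) = - l12 p / l11 p"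
  using l11_skew l21_skew by (simp add: kk_eq)

lemma constant_coeffs:
  "\<forall>i<4. \<exists>c. L1_coeff i = (\<lambda>x. c)" "\<forall>i<4. \<exists>c. L2_coeff i = (\<lambda>x. c)"
  "\<forall>i<4. \<exists>c. Lb1_coeff i = (\<lambda>x. c)" "\<forall>i<4. \<exists>c. Lb2_coeff i = (\<lambda>x. c)"
  "\<forall>i<4. \<exists>c. dv_coeff i = (\<lambda>x. c)"
  by (auto simp: L1_coeff_def L2_coeff_def Lb1_coeff_def Lb2_coeff_def dv_coeff_def)

lemmas commutator_vertical =
  vfield_commutator_vertical[OF _ _ open_U _ smooth_coeffs(1) smooth_coeffs(3) _ constant_coeffs(1,3)]
  vfield_commutator_vertical[OF _ _ open_U _ smooth_coeffs(1) smooth_coeffs(4) _ constant_coeffs(1,4)]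
  vfield_commutator_vertical[OF _ _ open_U _ smooth_coeffs(2) smooth_coeffs(3) _ constant_coeffs(2,3)]
  vfield_commutator_vertical[OF _ _ open_U _ smooth_coeffs(2) smooth_coeffs(4) _ constant_coeffs(2,4)]
  vfield_commutator_vertical[OF _ _ open_U _ smooth_coeffs(5) smooth_coeffs(3) _ constant_coeffs(5,3)]
  vfield_commutator_vertical[OF _ _ open_U _ smooth_coeffs(5) smooth_coeffs(4) _ constant_coeffs(5,4)]
  vfield_commutator_vertical[OF _ _ open_U _ smooth_coeffs(3) smooth_coeffs(4) _ constant_coeffs(3,4)]

lemma L_Lb_commute:
  assumes "smooth_on U h" "p \<in> U"
  shows "L1 F (Lb1 F h) p = Lb1 F (L1 F h) p + l11 p * dv h p"
    "L1 F (Lb2 F h) p = Lb2 F (L1 F h) p + l12 p * dv h p"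
    "L2 F (Lb1 F h) p = Lb1 F (L2 F h) p + l21 p * dv h p"
    "L2 F (Lb2 F h) p = Lb2 F (L2 F h) p + l22 p * dv h p"
  using commutator_vertical(1)[OF L1_vfield Lb1_vfield assms(2,1)]
    commutator_vertical(2)[OF L1_vfield Lb2_vfield assms(2,1)]
    commutator_vertical(3)[OF L2_vfield Lb1_vfield assms(2,1)]
    commutator_vertical(4)[OF L2_vfield Lb2_vfield assms(2,1)]
  by (simp_all add: coeffs_4 l_defs dv_def diff_eq_eq)

lemma dv_Lb_commute:
  assumes "smooth_on U h" "p \<in> U"
  shows "dv (Lb1 F h) p = Lb1 F (dv h) p + dv (cj (A1 F)) p * dv h p"
    "dv (Lb2 F h) p = Lb2 F (dv h) p + dv (cj (A2 F)) p * dv h p"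
  using commutator_vertical(5)[OF dv_vfield Lb1_vfield assms(2,1)]
    commutator_vertical(6)[OF dv_vfield Lb2_vfield assms(2,1)]
  by (simp_all add: coeffs_4 dv_def diff_eq_eq)

lemma Lb_Lb_commutator:
  assumes "smooth_on U h" "p \<in> U"
  shows "Lb1 F (Lb2 F h) p - Lb2 F (Lb1 F h) p = (Lb1 F (cj (A2 F)) p - Lb2 F (cj (A1 F)) p) * dv h p"
  using commutator_vertical(7)[OF Lb1_vfield Lb2_vfield assms(2,1)]
  by (simp add: coeffs_4 dv_def)

text \<open>On \<open>M\<close> the holomorphic coordinate \<open>w = u + i v\<close> equals \<open>F + i v\<close>, which \<open>Lb1\<close> and
  \<open>Lb2\<close> annihilate.\<close>

definition w_on_M :: "pt \<Rightarrow> complex" where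
  "w_on_M x = Fc F x + \<i> * coord_v x"

lemma pd_w_on_M: "p \<in> U \<Longrightarrow> pd e w_on_M p = pd e (Fc F) p + \<i> * of_real (snd (snd e))"
  unfolding w_on_M_def[abs_def]
  using smooth_on_differentiable[OF smooth_F] bounded_linear_imp_differentiable[OF bounded_linear_coords(3)]
  by (simp add: pd_add pd_mult pd_const pd_coords differentiable_mult)

lemma Lb_w_on_M: assumes p: "p \<in> U" shows "Lb1 F w_on_M p = 0" "Lb2 F w_on_M p = 0"
proof -
  define r where "r = dv (Fc F) p"
  have r: "cnj r = r" "1 - \<i> * r \<noteq> 0"
    using pd_Fc_real[OF p, of ev] Im_dv_Fc[OF p]
    by (simp_all add: r_def dv_def complex_eq_iff)
  have "dv w_on_M p = r + \<i>" by (simp add: r_def dv_def pd_w_on_M[OF p] ev_def)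
  then show "Lb1 F w_on_M p = 0" "Lb2 F w_on_M p = 0"
    using r pd_Fc_real[OF p]
    by (simp_all add: Lb1_def Lb2_def A1_def A2_def dz1_def dz2_def dzb1_def dzb2_def
        pd_w_on_M[OF p] ex1_def ey1_def ex2_def ey2_def r_def[symmetric] field_simps)
qed

lemma Lb1_cj_A2: assumes p: "p \<in> U" shows "Lb1 F (cj (A2 F)) p = Lb2 F (cj (A1 F)) p"
proof -
  have smooth_w: "smooth_on U w_on_M"
    unfolding w_on_M_def[abs_def] using open_U
    by (intro smooth_on_add smooth_on_mult smooth_F smooth_on_const
        smooth_on_linear[OF bounded_linear_coords(3)])
  have "Lb1 F (Lb2 F w_on_M) p = 0" "Lb2 F (Lb1 F w_on_M) p = 0"
    using vfield_transform_open[OF Lb1_vfield open_U p, of "Lb2 F w_on_M" "\<lambda>x. 0"]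
      vfield_transform_open[OF Lb2_vfield open_U p, of "Lb1 F w_on_M" "\<lambda>x. 0"]
      Lb_w_on_M smooth_on_differentiable[OF smooth_vector_fields(3)[OF smooth_w] p]
      smooth_on_differentiable[OF smooth_vector_fields(4)[OF smooth_w] p]
    by simp_all
  moreover have "dv w_on_M p \<noteq> 0"
    using Im_dv_Fc[OF p] by (simp add: dv_def pd_w_on_M[OF p] ev_def complex_eq_iff)
  ultimately show ?thesis using Lb_Lb_commutator[OF smooth_w p] by simp
qed

lemma Lb1_Lb2_commute: "smooth_on U h \<Longrightarrow> p \<in> U \<Longrightarrow> Lb1 F (Lb2 F h) p = Lb2 F (Lb1 F h) p"
  using Lb_Lb_commutator Lb1_cj_A2 by simp

lemma kbar_l11_plus_l12: "p \<in> U \<Longrightarrow> cj (kk F) p * l11 p + l12 p = 0"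
  using cnj_kk l11_nonzero by (simp add: cj_def field_simps)

lemma kbar_l21_plus_l22: assumes p: "p \<in> U" shows "cj (kk F) p * l21 p + l22 p = 0"
proof -
  have k: "cj (kk F) p = - l12 p / l11 p" using cnj_kk[OF p] by (simp add: cj_def)
  have "cj (kk F) p * l21 p + l22 p = (l11 p * l22 p - l12 p * l21 p) / l11 p"
    unfolding k using l11_nonzero[OF p] by (simp add: field_simps)
  then show ?thesis using levi_det_zero[OF p] by simp
qed

lemma k_l11_plus_l21: "p \<in> U \<Longrightarrow> kk F p * l11 p + l21 p = 0"
  using l11_nonzero by (simp add: kk_eq field_simps)

lemma Kb_Lb1_commutator:
  assumes h: "smooth_on U h" and p: "p \<in> U"
  shows "Kb F (Lb1 F h) p - Lb1 F (Kb F h) p = - kb1 p * Lb1 F h p"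
proof -
  have "Lb1 F (Kb F h) p = cj (kk F) p * Lb1 F (Lb1 F h) p + kb1 p * Lb1 F h p + Lb1 F (Lb2 F h) p"
    unfolding Kb_eq
    by (intro vfield_mult_add[OF Lb1_vfield] smooth_on_differentiable[OF _ p] smooth_intros h)
  then show ?thesis using Lb1_Lb2_commute[OF h p] by (simp add: Kb_eq)
qed

lemma Kb_L1_commutator:
  assumes h: "smooth_on U h" and p: "p \<in> U"
  shows "Kb F (L1 F h) p - L1 F (Kb F h) p = - L1 F (cj (kk F)) p * Lb1 F h p"
proof -
  have "L1 F (Kb F h) p
      = cj (kk F) p * L1 F (Lb1 F h) p + L1 F (cj (kk F)) p * Lb1 F h p + L1 F (Lb2 F h) p"
    unfolding Kb_eq
    by (intro vfield_mult_add[OF L1_vfield] smooth_on_differentiable[OF _ p] smooth_intros h)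
  then have "Kb F (L1 F h) p - L1 F (Kb F h) p
      = - (cj (kk F) p * l11 p + l12 p) * dv h p - L1 F (cj (kk F)) p * Lb1 F h p"
    by (simp add: Kb_eq L_Lb_commute[OF h p] algebra_simps)
  then show ?thesis using kbar_l11_plus_l12[OF p] by simp
qed

lemma Kb_L2_commutator:
  assumes h: "smooth_on U h" and p: "p \<in> U"
  shows "Kb F (L2 F h) p - L2 F (Kb F h) p = - L2 F (cj (kk F)) p * Lb1 F h p"
proof -
  have "L2 F (Kb F h) p
      = cj (kk F) p * L2 F (Lb1 F h) p + L2 F (cj (kk F)) p * Lb1 F h p + L2 F (Lb2 F h) p"
    unfolding Kb_eq
    by (intro vfield_mult_add[OF L2_vfield] smooth_on_differentiable[OF _ p] smooth_intros h)
  then have "Kb F (L2 F h) p - L2 F (Kb F h) p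
      = - (cj (kk F) p * l21 p + l22 p) * dv h p - L2 F (cj (kk F)) p * Lb1 F h p"
    by (simp add: Kb_eq L_Lb_commute[OF h p] algebra_simps)
  then show ?thesis using kbar_l21_plus_l22[OF p] by simp
qed

lemma K_Lb1_commutator:
  assumes h: "smooth_on U h" and p: "p \<in> U"
  shows "K (Lb1 F h) p - Lb1 F (K h) p = - k1 p * L1 F h p"
proof -
  have "Lb1 F (K h) p = kk F p * Lb1 F (L1 F h) p + k1 p * L1 F h p + Lb1 F (L2 F h) p"
    unfolding K_eq
    by (intro vfield_mult_add[OF Lb1_vfield] smooth_on_differentiable[OF _ p] smooth_intros h)
  then have "K (Lb1 F h) p - Lb1 F (K h) p = (kk F p * l11 p + l21 p) * dv h p - k1 p * L1 F h p"
    by (simp add: K_eq L_Lb_commute[OF h p] algebra_simps)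
  then show ?thesis using k_l11_plus_l21[OF p] by simp
qed

lemma Kb_K_commutator:
  assumes h: "smooth_on U h" and p: "p \<in> U"
  shows "Kb F (K h) p - K (Kb F h) p = Kb F (kk F) p * L1 F h p - K (cj (kk F)) p * Lb1 F h p"
proof -
  have "Kb F (K h) p = kk F p * Kb F (L1 F h) p + Kb F (kk F) p * L1 F h p + Kb F (L2 F h) p"
    unfolding K_eq
    by (intro vfield_mult_add[OF Kb_vfield] smooth_on_differentiable[OF _ p] smooth_intros h)
  then have "Kb F (K h) p - K (Kb F h) p = kk F p * (Kb F (L1 F h) p - L1 F (Kb F h) p)
     + (Kb F (L2 F h) p - L2 F (Kb F h) p) + Kb F (kk F) p * L1 F h p"
    by (simp add: K_eq algebra_simps)
  then show ?thesis by (simp add: Kb_L1_commutator[OF h p] Kb_L2_commutator[OF h p] K_eq algebra_simps)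
qed

lemma dv_Kb_commutator:
  assumes h: "smooth_on U h" and p: "p \<in> U"
  shows "dv (Kb F h) p - Kb F (dv h) p = dv (cj (kk F)) p * Lb1 F h p
     + (cj (kk F) p * dv (cj (A1 F)) p + dv (cj (A2 F)) p) * dv h p"
proof -
  have "dv (Kb F h) p
      = cj (kk F) p * dv (Lb1 F h) p + dv (cj (kk F)) p * Lb1 F h p + dv (Lb2 F h) p"
    unfolding Kb_eq
    by (intro vfield_mult_add[OF dv_vfield] smooth_on_differentiable[OF _ p] smooth_intros h)
  then show ?thesis by (simp add: Kb_eq dv_Lb_commute[OF h p] algebra_simps)
qed

subsection \<open>Two Jacobi identities\<close>

lemma vector_fields_on_coords:
  "L1 F coord_z1 p = 1" "Lb1 F coord_z1 p = 0" "dv coord_z1 p = 0"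
  "L1 F coord_zb1 p = 0" "Lb1 F coord_zb1 p = 1" "dv coord_zb1 p = 0"
  "L1 F coord_v p = A1 F p" "Lb1 F coord_v p = cnj (A1 F p)" "dv coord_v p = 1"
  by (simp_all add: L1_def Lb1_def dz1_def dzb1_def dv_def pd_coords ex1_def ey1_def ev_def)

lemma smooth_coords: "smooth_on U coord_z1" "smooth_on U coord_zb1" "smooth_on U coord_v"
  using bounded_linear_coords by (simp_all add: smooth_on_linear)

text \<open>The Jacobi identity for \<open>Kb\<close>, \<open>K\<close> and \<open>Lb1\<close>, with the brackets evaluated by the
  commutator formulas above.\<close>

lemma jacobi_Kb_K_Lb1:
  assumes h: "smooth_on U h" and p: "p \<in> U"
  shows "Kb F (kk F) p * l11 p * dv h p
     + (- Lb1 F (Kb F (kk F)) p + Kb F k1 p + kb1 p * k1 p) * L1 F h p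
     + (Lb1 F (K (cj (kk F))) p - k1 p * L1 F (cj (kk F)) p - K kb1 p) * Lb1 F h p = 0"
proof -
  let ?A = "Kb F (K (Lb1 F h)) p" and ?B = "K (Kb F (Lb1 F h)) p" and ?C = "Lb1 F (Kb F (K h)) p"
  let ?D = "Lb1 F (K (Kb F h)) p" and ?E = "K (Lb1 F (Kb F h)) p" and ?G = "Kb F (Lb1 F (K h)) p"
  note smooth = h smooth_intros smooth_on_const
  have AB: "?A - ?B = Kb F (kk F) p * L1 F (Lb1 F h) p - K (cj (kk F)) p * Lb1 F (Lb1 F h) p"
    using Kb_K_commutator[OF smooth_vector_fields(3)[OF h] p] .
  have CD: "?C - ?D = (Kb F (kk F) p * Lb1 F (L1 F h) p + Lb1 F (Kb F (kk F)) p * L1 F h p)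
      - (K (cj (kk F)) p * Lb1 F (Lb1 F h) p + Lb1 F (K (cj (kk F))) p * Lb1 F h p)"
    by (rule vfield_diff_of_products[OF Lb1_vfield open_U p])
      (use Kb_K_commutator[OF h] in simp, (intro smooth)+)
  have ED: "?E - ?D = - k1 p * L1 F (Kb F h) p"
    using K_Lb1_commutator[OF smooth_K_Kb(1)[OF h] p] .
  have GA: "?G - ?A = k1 p * Kb F (L1 F h) p + Kb F k1 p * L1 F h p"
    by (rule vfield_diff_of_product[OF Kb_vfield open_U p])
      (use K_Lb1_commutator[OF h] in \<open>simp add: algebra_simps\<close>, (intro smooth)+)
  have CG: "?C - ?G = kb1 p * Lb1 F (K h) p"
    using Kb_Lb1_commutator[OF smooth_K_Kb(2)[OF h] p] by (simp add: algebra_simps)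
  have EB: "?E - ?B = kb1 p * K (Lb1 F h) p + K kb1 p * Lb1 F h p"
    by (rule vfield_diff_of_product[OF K_vfield open_U p])
      (use Kb_Lb1_commutator[OF h] in \<open>simp add: algebra_simps\<close>, (intro smooth)+)
  have J1: "(?A - ?B) - (?C - ?D) = Kb F (kk F) p * l11 p * dv h p
      - Lb1 F (Kb F (kk F)) p * L1 F h p + Lb1 F (K (cj (kk F))) p * Lb1 F h p"
    unfolding AB CD L_Lb_commute(1)[OF h p] by (simp add: algebra_simps)
  have "(?E - ?D) + (?G - ?A) = k1 p * (Kb F (L1 F h) p - L1 F (Kb F h) p) + Kb F k1 p * L1 F h p"
    unfolding ED GA by (simp add: algebra_simps)
  then have J2: "(?E - ?D) + (?G - ?A) = - k1 p * L1 F (cj (kk F)) p * Lb1 F h p + Kb F k1 p * L1 F h p"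
    unfolding Kb_L1_commutator[OF h p] by simp
  have "(?C - ?G) - (?E - ?B) = - kb1 p * (K (Lb1 F h) p - Lb1 F (K h) p) - K kb1 p * Lb1 F h p"
    unfolding CG EB by (simp add: algebra_simps)
  then have J3: "(?C - ?G) - (?E - ?B) = kb1 p * k1 p * L1 F h p - K kb1 p * Lb1 F h p"
    unfolding K_Lb1_commutator[OF h p] by simp
  have "((?A - ?B) - (?C - ?D)) + ((?E - ?D) + (?G - ?A)) + ((?C - ?G) - (?E - ?B)) = 0"
    by simp
  then show ?thesis unfolding J1 J2 J3 by (simp add: algebra_simps)
qed

text \<open>Testing the Jacobi identity on \<open>z1\<close>, \<open>cj z1\<close> and \<open>v\<close> separates its three coefficients.\<close>

lemma Kb_kk: assumes p: "p \<in> U" shows "Kb F (kk F) p = 0"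
proof -
  have "Lb1 F (K (cj (kk F))) p - k1 p * L1 F (cj (kk F)) p - K kb1 p = 0"
    "- Lb1 F (Kb F (kk F)) p + Kb F k1 p + kb1 p * k1 p = 0"
    using jacobi_Kb_K_Lb1[OF smooth_coords(2) p] jacobi_Kb_K_Lb1[OF smooth_coords(1) p]
    by (simp_all add: vector_fields_on_coords)
  then have "Kb F (kk F) p * l11 p = 0"
    using jacobi_Kb_K_Lb1[OF smooth_coords(3) p] by (simp add: vector_fields_on_coords)
  then show ?thesis using l11_nonzero[OF p] by simp
qed

lemma jacobi_Kb_L1_Lb1:
  assumes h: "smooth_on U h" and p: "p \<in> U"
  shows "(kb1 p * l11 p + Kb F l11 p - l11 p * (cj (kk F) p * dv (cj (A1 F)) p + dv (cj (A2 F)) p))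
       * dv h p
     + (L1 F kb1 p - l11 p * dv (cj (kk F)) p - Lb1 F (L1 F (cj (kk F))) p) * Lb1 F h p = 0"
proof -
  let ?XZY = "Kb F (Lb1 F (L1 F h)) p" and ?ZXY = "Lb1 F (Kb F (L1 F h)) p"
    and ?YXZ = "L1 F (Kb F (Lb1 F h)) p" and ?YZX = "L1 F (Lb1 F (Kb F h)) p"
    and ?ZYX = "Lb1 F (L1 F (Kb F h)) p" and ?XYZ = "Kb F (L1 F (Lb1 F h)) p"
  note smooth = h smooth_intros smooth_on_const
  have a1: "?XZY - ?ZXY = - kb1 p * Lb1 F (L1 F h) p"
    using Kb_Lb1_commutator[OF smooth_vector_fields(1)[OF h] p] .
  have a2: "?YZX - ?YXZ = kb1 p * L1 F (Lb1 F h) p + L1 F kb1 p * Lb1 F h p"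
    by (rule vfield_diff_of_product[OF L1_vfield open_U p])
      (use Kb_Lb1_commutator[OF h] in \<open>simp add: algebra_simps\<close>, (intro smooth)+)
  have b1: "?ZYX - ?YZX = - l11 p * dv (Kb F h) p"
    using L_Lb_commute(1)[OF smooth_K_Kb(1)[OF h] p] by simp
  have b2: "?XYZ - ?XZY = l11 p * Kb F (dv h) p + Kb F l11 p * dv h p"
    by (rule vfield_diff_of_product[OF Kb_vfield open_U p])
      (use L_Lb_commute(1)[OF h] in simp, (intro smooth)+)
  have c1: "?YXZ - ?XYZ = L1 F (cj (kk F)) p * Lb1 F (Lb1 F h) p"
    using Kb_L1_commutator[OF smooth_vector_fields(3)[OF h] p] by (simp add: algebra_simps)
  have c2: "?ZYX - ?ZXY = L1 F (cj (kk F)) p * Lb1 F (Lb1 F h) p + Lb1 F (L1 F (cj (kk F))) p * Lb1 F h p"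
    by (rule vfield_diff_of_product[OF Lb1_vfield open_U p])
      (use Kb_L1_commutator[OF h] in \<open>simp add: algebra_simps\<close>, (intro smooth)+)
  have J1: "(?XZY - ?ZXY) + (?YZX - ?YXZ) = kb1 p * l11 p * dv h p + L1 F kb1 p * Lb1 F h p"
    unfolding a1 a2 L_Lb_commute(1)[OF h p] by (simp add: algebra_simps)
  have "(?ZYX - ?YZX) + (?XYZ - ?XZY) = Kb F l11 p * dv h p - l11 p * (dv (Kb F h) p - Kb F (dv h) p)"
    unfolding b1 b2 by (simp add: algebra_simps)
  then have J2: "(?ZYX - ?YZX) + (?XYZ - ?XZY) = Kb F l11 p * dv h p - l11 p * (dv (cj (kk F)) p
      * Lb1 F h p + (cj (kk F) p * dv (cj (A1 F)) p + dv (cj (A2 F)) p) * dv h p)"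
    unfolding dv_Kb_commutator[OF h p] .
  have J3: "(?YXZ - ?XYZ) - (?ZYX - ?ZXY) = - Lb1 F (L1 F (cj (kk F))) p * Lb1 F h p"
    unfolding c1 c2 by simp
  have "((?XZY - ?ZXY) + (?YZX - ?YXZ)) + ((?ZYX - ?YZX) + (?XYZ - ?XZY))
      + ((?YXZ - ?XYZ) - (?ZYX - ?ZXY)) = 0"
    by simp
  then show ?thesis unfolding J1 J2 J3 by (simp add: algebra_simps)
qed

definition Kb_log_l11 :: "pt \<Rightarrow> complex" where
  "Kb_log_l11 x = cj (kk F) x * dv (cj (A1 F)) x + dv (cj (A2 F)) x - kb1 x"

lemma Kb_l11: assumes p: "p \<in> U" shows "Kb F l11 p = l11 p * Kb_log_l11 p"
proof -
  have "L1 F kb1 p - l11 p * dv (cj (kk F)) p - Lb1 F (L1 F (cj (kk F))) p = 0"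
    using jacobi_Kb_L1_Lb1[OF smooth_coords(2) p] by (simp add: vector_fields_on_coords)
  then have "kb1 p * l11 p + Kb F l11 p - l11 p * (cj (kk F) p * dv (cj (A1 F)) p + dv (cj (A2 F)) p) = 0"
    using jacobi_Kb_L1_Lb1[OF smooth_coords(3) p] by (simp add: vector_fields_on_coords)
  then show ?thesis by (simp add: Kb_log_l11_def algebra_simps)
qed

definition Pb_formula :: "pt \<Rightarrow> complex" where
  "Pb_formula x = Lb1 F l11 x / l11 x - dv (cj (A1 F)) x"

lemma smooth_Pb_formula: "smooth_on U Pb_formula"
  unfolding Pb_formula_def[abs_def] using open_U l11_nonzero
  by (intro smooth_on_diff smooth_on_divide smooth_intros) auto

lemma Pb_eq_Pb_formula: assumes p: "p \<in> U" shows "Pb p = Pb_formula p"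
proof -
  have d: "l11 differentiable (at p)" by (rule smooth_on_differentiable[OF smooth_levi(1) p])
  have "dz1 (ell F) p + A1 F p * dv (ell F) p = L1 F (ell F) p" by (simp add: L1_def)
  also have "\<dots> = \<i> * L1 F l11 p"
    unfolding ell_eq by (rule vfield_cmult[OF L1_vfield d])
  finally have "PP F p = L1 F l11 p / l11 p - dv (A1 F) p"
    using l11_nonzero[OF p] by (simp add: PP_def ell_eq field_simps)
  moreover have "cnj (L1 F l11 p) = - Lb1 F l11 p"
  proof -
    have "cnj (L1 F l11 p) = Lb1 F (cj l11) p" by (rule cnj_vector_fields(1)[OF d])
    also have "\<dots> = Lb1 F (\<lambda>x. - l11 x) p"
      by (rule vfield_transform_open[OF Lb1_vfield open_U p])
        (simp_all add: cj_def l11_skew smooth_on_differentiable[OF smooth_on_cj[OF open_U smooth_levi(1)] p])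
    also have "\<dots> = - Lb1 F l11 p" by (rule vfield_minus[OF Lb1_vfield d])
    finally show ?thesis .
  qed
  moreover have "cnj (dv (A1 F) p) = dv (cj (A1 F)) p"
    by (rule cnj_vector_fields(5)[OF smooth_on_differentiable[OF smooth_A1 p]])
  ultimately show ?thesis
    using l11_skew[OF p] l11_nonzero[OF p] by (simp add: cj_def Pb_formula_def)
qed

lemma smooth_Pb: "smooth_on U Pb"
  using smooth_on_transform_open[OF open_U _ smooth_Pb_formula] Pb_eq_Pb_formula by simp

lemma smooth_Kb_log_l11: "smooth_on U Kb_log_l11"
  unfolding Kb_log_l11_def[abs_def] using open_U
  by (intro smooth_on_diff smooth_on_add smooth_on_mult smooth_intros)

lemma Kb_Lb1_l11_div_l11:
  assumes p: "p \<in> U"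
  shows "Kb F (\<lambda>x. Lb1 F l11 x / l11 x) p = Lb1 F Kb_log_l11 p - kb1 p * Lb1 F l11 p / l11 p"
proof -
  note l0 = l11_nonzero[OF p]
  have s1: "Kb F (\<lambda>x. Lb1 F l11 x / l11 x) p
      = (Kb F (Lb1 F l11) p * l11 p - Lb1 F l11 p * Kb F l11 p) / (l11 p)\<^sup>2"
    by (rule vfield_divide[OF Kb_vfield]) (intro smooth_on_differentiable[OF _ p] smooth_intros l0)+
  have s2: "Kb F (Lb1 F l11) p = Lb1 F (Kb F l11) p - kb1 p * Lb1 F l11 p"
    using Kb_Lb1_commutator[OF smooth_levi(1) p] by (simp add: algebra_simps)
  have s3: "Lb1 F (Kb F l11) p = l11 p * Lb1 F Kb_log_l11 p + Lb1 F l11 p * Kb_log_l11 p"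
    using vfield_diff_of_product[OF Lb1_vfield open_U p, of "Kb F l11" "\<lambda>x. 0" l11 Kb_log_l11]
      Kb_l11
    by (simp add: smooth_intros smooth_on_const smooth_Kb_log_l11)
  show ?thesis
    unfolding s1 s2 s3 Kb_l11[OF p] using l0 by (simp add: field_simps power2_eq_square)
qed

lemma Lb1_Kb_log_l11:
  assumes p: "p \<in> U"
  shows "Lb1 F Kb_log_l11 p
    = cj (kk F) p * Lb1 F (dv (cj (A1 F))) p + kb1 p * dv (cj (A1 F)) p + Lb1 F (dv (cj (A2 F))) p - kb2 p"
proof -
  note d = smooth_on_differentiable[OF _ p]
  have "Lb1 F Kb_log_l11 p
      = Lb1 F (\<lambda>x. cj (kk F) x * dv (cj (A1 F)) x + dv (cj (A2 F)) x) p - kb2 p"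
    unfolding Kb_log_l11_def[abs_def] by (rule vfield_diff[OF Lb1_vfield])
      (intro differentiable_add differentiable_mult d smooth_intros)+
  also have "Lb1 F (\<lambda>x. cj (kk F) x * dv (cj (A1 F)) x + dv (cj (A2 F)) x) p
      = cj (kk F) p * Lb1 F (dv (cj (A1 F))) p + kb1 p * dv (cj (A1 F)) p + Lb1 F (dv (cj (A2 F))) p"
    by (rule vfield_mult_add[OF Lb1_vfield]) (intro d smooth_intros)+
  finally show ?thesis .
qed

lemma Kb_dv_cj_A1:
  assumes p: "p \<in> U"
  shows "Kb F (dv (cj (A1 F))) p = cj (kk F) p * Lb1 F (dv (cj (A1 F))) p + Lb1 F (dv (cj (A2 F))) p"
proof -
  note d = smooth_on_differentiable[OF _ p]
  have "dv (Kb F (cj (A1 F))) p = dv (\<lambda>x. cj (kk F) x * Lb1 F (cj (A1 F)) x + Lb1 F (cj (A2 F)) x) p"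
    by (rule vfield_transform_open[OF dv_vfield open_U p])
      (simp_all add: Kb_eq Lb1_cj_A2 d smooth_intros)
  also have "\<dots> = cj (kk F) p * dv (Lb1 F (cj (A1 F))) p + dv (cj (kk F)) p * Lb1 F (cj (A1 F)) p
      + dv (Lb1 F (cj (A2 F))) p"
    by (rule vfield_mult_add[OF dv_vfield]) (intro d smooth_intros)+
  finally have dv_Kb: "dv (Kb F (cj (A1 F))) p = \<dots>" .
  have "Kb F (dv (cj (A1 F))) p = dv (Kb F (cj (A1 F))) p - (dv (cj (kk F)) p * Lb1 F (cj (A1 F)) p
     + (cj (kk F) p * dv (cj (A1 F)) p + dv (cj (A2 F)) p) * dv (cj (A1 F)) p)"
    using dv_Kb_commutator[OF smooth_cj_A(1) p] by (simp add: algebra_simps)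
  then show ?thesis
    unfolding dv_Kb dv_Lb_commute[OF smooth_cj_A(1) p] dv_Lb_commute[OF smooth_cj_A(2) p]
    by (simp add: algebra_simps)
qed

lemma Kb_Pb_formula:
  assumes p: "p \<in> U"
  shows "Kb F Pb_formula p = - kb2 p - kb1 p * Pb_formula p"
proof -
  have Kb_Pb: "Kb F Pb_formula p = Kb F (\<lambda>x. Lb1 F l11 x / l11 x) p - Kb F (dv (cj (A1 F))) p"
    unfolding Pb_formula_def[abs_def]
    by (intro vfield_diff[OF Kb_vfield] differentiable_divide smooth_on_differentiable[OF _ p]
        smooth_intros l11_nonzero[OF p])
  show ?thesis
    unfolding Kb_Pb Kb_Lb1_l11_div_l11[OF p] Lb1_Kb_log_l11[OF p] Kb_dv_cj_A1[OF p] Pb_formula_def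
    by (simp add: algebra_simps)
qed

lemma Kb_Lb1_of_products:
  assumes eq: "\<forall>x\<in>U. Kb F h x = f x * g x - f' x * g' x" and p: "p \<in> U"
    and smooth: "smooth_on U h" "smooth_on U f" "smooth_on U g" "smooth_on U f'" "smooth_on U g'"
  shows "Kb F (Lb1 F h) p
    = (f p * Lb1 F g p + Lb1 F f p * g p) - (f' p * Lb1 F g' p + Lb1 F f' p * g' p) - kb1 p * Lb1 F h p"
proof -
  have "Lb1 F (Kb F h) p - Lb1 F (\<lambda>x. 0) p
      = (f p * Lb1 F g p + Lb1 F f p * g p) - (f' p * Lb1 F g' p + Lb1 F f' p * g' p)"
    by (rule vfield_diff_of_products[OF Lb1_vfield open_U p])
      (use eq in simp, (intro smooth smooth_intros smooth_on_const)+)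
  moreover have "Kb F (Lb1 F h) p = Lb1 F (Kb F h) p - kb1 p * Lb1 F h p"
    using Kb_Lb1_commutator[OF smooth(1) p] by (simp add: algebra_simps)
  ultimately show ?thesis by simp
qed

lemma Kb_k1: "p \<in> U \<Longrightarrow> Kb F k1 p = - (kb1 p * k1 p)"
  using Kb_Lb1_of_products[of "kk F" "\<lambda>x. 0" "\<lambda>x. 0" "\<lambda>x. 0" "\<lambda>x. 0"] Kb_kk
  by (simp add: smooth_kk smooth_on_const)

lemma Kb_k2: "p \<in> U \<Longrightarrow> Kb F k2 p = - (kb2 p * k1 p) - 2 * (kb1 p * k2 p)"
  using Kb_Lb1_of_products[of k1 "\<lambda>x. 0" "\<lambda>x. 0" kb1 k1] Kb_k1
  by (simp add: smooth_intros smooth_on_const algebra_simps)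

lemma Kb_k3:
  assumes p: "p \<in> U"
  shows "Kb F k3 p = - (Lb1 F kb2 p * k1 p) - 3 * (kb2 p * k2 p) - 3 * (kb1 p * k3 p)"
  using Kb_Lb1_of_products[OF _ p, of k2 "\<lambda>x. - kb2 x" k1 "\<lambda>x. 2 * kb1 x" k2] Kb_k2
  by (simp add: smooth_intros smooth_on_minus[OF open_U] smooth_on_mult[OF open_U] smooth_on_const
      vfield_minus[OF Lb1_vfield] vfield_cmult[OF Lb1_vfield] smooth_on_differentiable[OF _ p]
      algebra_simps)

lemma Kb_Pb: assumes p: "p \<in> U" shows "Kb F Pb p = - kb2 p - kb1 p * Pb p"
proof -
  have "Kb F Pb p = Kb F Pb_formula p"
    by (rule vfield_transform_open[OF Kb_vfield open_U p])
      (simp_all add: Pb_eq_Pb_formula smooth_on_differentiable[OF smooth_Pb p])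
  then show ?thesis using Kb_Pb_formula[OF p] Pb_eq_Pb_formula[OF p] by simp
qed

lemma Kb_Lb1_Pb: "p \<in> U \<Longrightarrow> Kb F (Lb1 F Pb) p = - Lb1 F kb2 p - kb2 p * Pb p - 2 * (kb1 p * Lb1 F Pb p)"
  using Kb_Lb1_of_products[of Pb "\<lambda>x. - 1" kb2 kb1 Pb] Kb_Pb
  by (simp add: smooth_intros smooth_Pb smooth_on_const algebra_simps)

lemma H0_eq: "H0 F = (\<lambda>p. - (1/6) * k3 p / k1 p + (2/9) * (k2 p)\<^sup>2 / (k1 p)\<^sup>2
        + (1/18) * k2 p * Pb p / k1 p + (1/6) * Lb1 F Pb p - (1/9) * (Pb p)\<^sup>2)"
  by (simp add: H0_def Let_def fun_eq_iff)

lemma Kb_H0: assumes p: "p \<in> U" shows "Kb F (H0 F) p = - 2 * kb1 p * H0 F p"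
proof -
  note k1 = Lb1_kk_nonzero[rule_format, OF p]
  note vf = vfield_add[OF Kb_vfield] vfield_diff[OF Kb_vfield] vfield_mult[OF Kb_vfield]
    vfield_divide[OF Kb_vfield] vfield_power2[OF Kb_vfield] vfield_minus[OF Kb_vfield]
    vfield_cmult[OF Kb_vfield]
  show ?thesis
    unfolding H0_eq
    apply (simp add: vf smooth_on_differentiable[OF _ p] smooth_intros smooth_Pb k1
        Kb_k1[OF p] Kb_k2[OF p] Kb_k3[OF p] Kb_Pb[OF p] Kb_Lb1_Pb[OF p])
    using k1 apply (simp add: field_simps power2_eq_square)
    apply (simp add: algebra_simps eval_nat_numeral)
    done
qed

end

theorem lemma8p8:
  fixes F :: "pt \<Rightarrow> real" and U :: "pt set"
  assumes "open U"
    and "smooth_on U (Fc F)"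
    and "\<forall>p\<in>U. ell F p \<noteq> 0"
    and "\<forall>p\<in>U. levi_rank_one F p"
    and "\<forall>p\<in>U. Lb1 F (kk F) p \<noteq> 0"
  shows "\<forall>p\<in>U. Kb F (H0 F) p = - 2 * Lb1 F (cj (kk F)) p * H0 F p"
proof -
  interpret levi_rank_one_hypersurface F U
    using assms by unfold_locales
  show ?thesis using Kb_H0 by blast
qed

end
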